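(* (i) Standard representations of $\mathcal{W}_N$ are irreducible and cyclic, and two standard representations $\rho,\mu$ are equivalent if and only if $a_\rho^{2N}=a_\mu^{2N}$ and $a_\rho^Ny_\rho^N=a_\mu^Ny_\mu^N$. (ii) Every irreducible cyclic representation of $\mathcal{W}_N$ is equivalent to a standard representation. (iii) Fix a determination $u\mapsto u^{1/N}$ of the $N$-th root. Let $\rho,\mu$ be irreducible cyclic representations such that $\rho\otimes\mu$ is cyclic, and let $\rho$ (resp. $\mu$) be equivalent to the standard representation with parameters $(a_\rho,y_\rho)$ (resp. $(a_\mu,y_\mu)$). Then $\rho\otimes\mu$ splits as a direct sum of $N$ representations, each equivalent to the standard representation $\rho\mu$ with parameters $$a_{\rho\mu}=a_\rho a_\mu,\qquad y_{\rho\mu}=\Big(a_\rho^Ny_\mu^N+\frac{y_\rho^N}{a_\mu^N}\Big)^{1/N}.$$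
   Context: $N\ge3$ odd, $\omega=e^{2\pi i/N}$. $\mathcal{W}_N$ is the unital $\mathbb{C}$-algebra generated by $E,E^{-1},D$ with $EE^{-1}=E^{-1}E=1$, $ED=\omega DE$; it is a Hopf algebra with $\Delta(E)=E\otimes E$, $\Delta(D)=E\otimes D+D\otimes 1$, $\epsilon(E)=1$, $\epsilon(D)=0$, $S(E)=E^{-1}$, $S(D)=-E^{-1}D$, and the tensor product of representations is $(\rho\otimes\mu)(a)=(\rho\otimes\mu)(\Delta(a))$. A representation is cyclic if $E$ and $D$ act invertibly. Let $X,Z$ be the $N\times N$ matrices (indices in $\mathbb{Z}/N$) with $X_{ij}=1$ if $i\equiv j+1$ and $0$ otherwise, $Z_{ij}=\omega^i$ if $i\equiv j$ and $0$ otherwise. For $a_\rho,y_\rho\in\mathbb{C}^*$, the standard representation $\rho$ with parameters $(a_\rho,y_\rho)$ is given on $\mathbb{C}^N$ by $\rho(E)=a_\rho^2Z$, $\rho(D)=a_\rho y_\rho X$. Two representations are equivalent if there is a linear isomorphism between their spaces commuting with the action of $\mathcal{W}_N$. *)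

theory Defs
  imports Complex_Main "Jordan_Normal_Form.Matrix"
begin

text \<open>Finite-dimensional representations of the Weyl algebra W_N on C^n are given by
  the images of the generators: an n x n matrix E (the image of E, invertible, so that
  E^{-1} is sent to its inverse) and an n x n matrix D with E D = omega D E.\<close>

definition omega :: "nat \<Rightarrow> complex" where
  "omega N = cis (2 * pi / real N)"

definition is_rep :: "nat \<Rightarrow> nat \<Rightarrow> complex mat \<Rightarrow> complex mat \<Rightarrow> bool" where
  "is_rep N n E D \<longleftrightarrow> E \<in> carrier_mat n n \<and> D \<in> carrier_mat n n \<and> invertible_mat E
     \<and> E * D = omega N \<cdot>\<^sub>m (D * E)"

definition cyclic_rep :: "nat \<Rightarrow> nat \<Rightarrow> complex mat \<Rightarrow> complex mat \<Rightarrow> bool" where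
  "cyclic_rep N n E D \<longleftrightarrow> is_rep N n E D \<and> invertible_mat E \<and> invertible_mat D"

text \<open>Subspaces of C^n and invariance under the generators E, E^{-1}, D
  (invariance under E^{-1} means W is contained in E(W)).\<close>
definition subspace_vec :: "nat \<Rightarrow> complex vec set \<Rightarrow> bool" where
  "subspace_vec n W \<longleftrightarrow> W \<subseteq> carrier_vec n \<and> 0\<^sub>v n \<in> W
     \<and> (\<forall>v\<in>W. \<forall>w\<in>W. v + w \<in> W) \<and> (\<forall>c. \<forall>v\<in>W. c \<cdot>\<^sub>v v \<in> W)"

definition invariant_subspace :: "nat \<Rightarrow> complex mat \<Rightarrow> complex mat \<Rightarrow> complex vec set \<Rightarrow> bool" where
  "invariant_subspace n E D W \<longleftrightarrow> subspace_vec n W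
     \<and> (\<forall>v\<in>W. E *\<^sub>v v \<in> W) \<and> (\<forall>v\<in>W. D *\<^sub>v v \<in> W)
     \<and> (\<forall>v\<in>W. \<exists>w\<in>W. E *\<^sub>v w = v)"

definition irreducible_rep :: "nat \<Rightarrow> nat \<Rightarrow> complex mat \<Rightarrow> complex mat \<Rightarrow> bool" where
  "irreducible_rep N n E D \<longleftrightarrow> is_rep N n E D \<and> n > 0
     \<and> (\<forall>W. invariant_subspace n E D W \<longrightarrow> W = {0\<^sub>v n} \<or> W = carrier_vec n)"

definition equiv_rep :: "nat \<Rightarrow> complex mat \<Rightarrow> complex mat \<Rightarrow> nat \<Rightarrow> complex mat \<Rightarrow> complex mat \<Rightarrow> bool" where
  "equiv_rep n E D m E' D' \<longleftrightarrow> n = m \<and> (\<exists>P. P \<in> carrier_mat m n \<and> invertible_mat P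
     \<and> P * E = E' * P \<and> P * D = D' * P)"

definition X_mat :: "nat \<Rightarrow> complex mat" where
  "X_mat N = mat N N (\<lambda>(i, j). if i mod N = (j + 1) mod N then 1 else 0)"

definition Z_mat :: "nat \<Rightarrow> complex mat" where
  "Z_mat N = mat N N (\<lambda>(i, j). if i = j then omega N ^ i else 0)"

definition std_E :: "nat \<Rightarrow> complex \<Rightarrow> complex \<Rightarrow> complex mat" where
  "std_E N a y = (a^2) \<cdot>\<^sub>m Z_mat N"

definition std_D :: "nat \<Rightarrow> complex \<Rightarrow> complex \<Rightarrow> complex mat" where
  "std_D N a y = (a * y) \<cdot>\<^sub>m X_mat N"

text \<open>Kronecker product; the basis vector e_i (x) f_k of C^m (x) C^n has index i*n+k.\<close>
definition kron :: "complex mat \<Rightarrow> complex mat \<Rightarrow> complex mat" where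
  "kron A B = mat (dim_row A * dim_row B) (dim_col A * dim_col B)
     (\<lambda>(i, j). A $$ (i div dim_row B, j div dim_col B) * B $$ (i mod dim_row B, j mod dim_col B))"

text \<open>Tensor product of representations via the coproduct:
  Delta(E) = E (x) E, Delta(D) = E (x) D + D (x) 1.\<close>
definition tensor_E :: "complex mat \<Rightarrow> complex mat \<Rightarrow> complex mat" where
  "tensor_E E1 E2 = kron E1 E2"

definition tensor_D :: "complex mat \<Rightarrow> complex mat \<Rightarrow> complex mat \<Rightarrow> complex mat \<Rightarrow> complex mat" where
  "tensor_D E1 D1 E2 D2 = kron E1 D2 + kron D1 (1\<^sub>m (dim_row E2))"

definition diag_copies :: "nat \<Rightarrow> complex mat \<Rightarrow> complex mat" where
  "diag_copies k A = mat (k * dim_row A) (k * dim_col A)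
     (\<lambda>(i, j). if i div dim_row A = j div dim_col A
               then A $$ (i mod dim_row A, j mod dim_col A) else 0)"

end

theory Submission
  imports Defs "Jordan_Normal_Form.Determinant" "Jordan_Normal_Form.Spectral_Radius"
begin

(* If the columns of U are a^2-eigenvectors of E on
   which D^N acts as the scalar t^N, the vectors t^-m D^m U (0 <= m < N) are eigenvectors of E
   for the pairwise distinct eigenvalues a^2 omega^m, and D shifts them cyclically with factor t.
   Averaging powers of E against the characters of Z/N separates them, so they are linearly
   independent and carry dim U copies of the standard representation with parameters (a, t/a).

   (i) The standard representation has simple E-spectrum and D permutes the eigenlines
   transitively, so a nonzero invariant subspace contains one basis vector and then all of them.
   E^N = a^(2N) and D^N = (a y)^N are scalars, which are invariants under equivalence; conversely
   the construction applied to one basis vector produces the equivalence.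
   (ii) In an irreducible cyclic representation D^N commutes with E and D, hence is a nonzero
   scalar (Schur); an eigenvector of E feeds the construction, and irreducibility forces the
   resulting copy of the standard representation to be the whole space.
   (iii) Delta(D) = E (x) D + D (x) 1 is a sum of two omega-commuting matrices, so by the
   q-binomial theorem at the primitive root omega its N-th power is D^N (x) 1 + E^N (x) D^N,
   again a scalar. The N vectors e_c (x) e_(-c) span the (a_rho a_mu)^2-eigenspace of E (x) E,
   and the construction with these N columns splits the tensor product into N standard
   summands. *)

section \<open>Roots of unity\<close>

lemma omega_power: "omega N ^ k = cis (2 * pi * real k / real N)"
  unfolding omega_def by (simp add: DeMoivre mult.commute)

lemma omega_nonzero [simp]: "omega N \<noteq> 0"
  unfolding omega_def by simp

lemma omega_power_N: "N > 0 \<Longrightarrow> omega N ^ N = 1"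
  by (simp add: omega_power)

lemma omega_power_power_N: "N > 0 \<Longrightarrow> (omega N ^ k) ^ N = 1"
  by (metis mult.commute omega_power_N power_mult power_one)

lemma omega_power_mod:
  assumes "N > 0"
  shows "omega N ^ (k mod N) = omega N ^ k"
proof -
  have "omega N ^ k = (omega N ^ N) ^ (k div N) * omega N ^ (k mod N)"
    by (metis mult_div_mod_eq power_add power_mult)
  then show ?thesis using omega_power_N[OF assms] by simp
qed

lemma omega_power_inj:
  assumes "N > 0" "p < N" "m < N" "omega N ^ p = omega N ^ m"
  shows "p = m"
proof -
  have "inj_on (\<lambda>k. cis (2 * pi * real k / real N)) {..<N}"
    using bij_betw_roots_unity[OF assms(1)] by (simp add: bij_betw_def)
  then show ?thesis using assms by (auto simp: omega_power inj_on_def)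
qed

lemma root_of_unity_omega_power:
  assumes "N > 0" "w ^ N = 1"
  obtains j where "j < N" "w = omega N ^ j"
proof -
  have "w \<in> (\<lambda>k. cis (2 * pi * real k / real N)) ` {..<N}"
    using bij_betw_roots_unity[OF assms(1)] assms(2) by (auto simp: bij_betw_def)
  then show ?thesis using that by (auto simp: omega_power)
qed

lemma complex_nth_root_exists:
  assumes "N > 0" "(c :: complex) \<noteq> 0"
  obtains t where "t ^ N = c"
proof -
  have "(1 :: complex) \<in> {z. z ^ N = 1}" by simp
  then show ?thesis
    using bij_betw_nth_root_unity[OF assms(2,1)] that unfolding bij_betw_def by blast
qed

lemma sum_omega_character:
  assumes "N > 0" "lam \<noteq> 0" "p < N" "m < N"
  shows "(\<Sum>k<N. (lam * omega N ^ p) ^ k / (lam * omega N ^ m) ^ k) = (if p = m then of_nat N else 0)"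
proof -
  define z where "z = omega N ^ p / omega N ^ m"
  have "(lam * omega N ^ p) ^ k / (lam * omega N ^ m) ^ k = z ^ k" for k
    using assms(2) by (simp add: z_def power_divide[symmetric])
  moreover have "z ^ N = 1"
    using omega_power_power_N[OF assms(1)] by (simp add: z_def power_divide)
  moreover have "z = 1 \<longleftrightarrow> p = m"
    using omega_power_inj[OF assms(1,3,4)] by (auto simp: z_def)
  ultimately show ?thesis using sum_gp_strict[of z N] by auto
qed

section \<open>Matrices\<close>

lemma nat_eq_iff_div_mod_eq: "(l :: nat) = j \<longleftrightarrow> l div N = j div N \<and> l mod N = j mod N"
  by (metis div_mult_mod_eq)

lemma block_index_less:
  fixes c m r N :: nat
  assumes "c < r" "m < N"
  shows "c * N + m < r * N"
proof -
  have "c * N + m < Suc c * N" using assms(2) by simp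
  also have "\<dots> \<le> r * N" using assms(1) by (intro mult_le_mono1) simp
  finally show ?thesis .
qed

lemma sum_lessThan_mult_blocks:
  fixes f :: "nat \<Rightarrow> 'a :: comm_monoid_add"
  shows "(\<Sum>j<r * N. f j) = (\<Sum>c<r. \<Sum>m<N. f (c * N + m))"
proof (induction r)
  case (Suc r)
  have "(\<Sum>j<Suc r * N. f j) = (\<Sum>j<r * N. f j) + (\<Sum>j=r * N..<r * N + N. f j)"
    by (simp add: add.commute atLeast0LessThan[symmetric] sum.atLeastLessThan_concat)
  also have "(\<Sum>j=r * N..<r * N + N. f j) = (\<Sum>m<N. f (r * N + m))"
    using sum.shift_bounds_nat_ivl[of f 0 "r * N" N] by (simp add: atLeast0LessThan add.commute)
  finally show ?case using Suc by simp
qed simp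

lemma index_mult_mat_sum:
  fixes A B :: "'a :: semiring_0 mat"
  assumes "A \<in> carrier_mat nr n" "B \<in> carrier_mat n nc" "i < nr" "j < nc"
  shows "(A * B) $$ (i, j) = (\<Sum>l<n. A $$ (i, l) * B $$ (l, j))"
  using assms by (auto simp: scalar_prod_def atLeast0LessThan intro: sum.cong)

lemma index_mult_mat_vec_sum:
  fixes A :: "'a :: semiring_0 mat"
  assumes "A \<in> carrier_mat nr n" "v \<in> carrier_vec n" "i < nr"
  shows "(A *\<^sub>v v) $ i = (\<Sum>l<n. A $$ (i, l) * v $ l)"
  using assms by (auto simp: scalar_prod_def atLeast0LessThan intro: sum.cong)

lemma smult_smult_mat [simp]: "a \<cdot>\<^sub>m (b \<cdot>\<^sub>m A) = (a * b :: 'a :: semigroup_mult) \<cdot>\<^sub>m A"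
  by (auto simp: mat_eq_iff mult.assoc)

lemma one_smult_mat [simp]: "(1 :: 'a :: monoid_mult) \<cdot>\<^sub>m A = A"
  by (auto simp: mat_eq_iff)

lemma smult_one_mat_mult:
  fixes B :: "'a :: comm_semiring_1 mat"
  assumes "B \<in> carrier_mat n m"
  shows "(c \<cdot>\<^sub>m 1\<^sub>m n) * B = c \<cdot>\<^sub>m B"
proof -
  have "(c \<cdot>\<^sub>m 1\<^sub>m n) * B = c \<cdot>\<^sub>m (1\<^sub>m n * B)" by (rule mult_smult_assoc_mat[OF one_carrier_mat assms])
  then show ?thesis using assms by simp
qed

lemma smult_one_mat_inj:
  assumes "n > 0" "c \<cdot>\<^sub>m 1\<^sub>m n = d \<cdot>\<^sub>m (1\<^sub>m n :: 'a :: semiring_1 mat)"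
  shows "c = d"
  using arg_cong[OF assms(2), of "\<lambda>M. M $$ (0, 0)"] assms(1) by simp

lemma smult_mat_mult_vec:
  fixes A :: "'a :: comm_ring_1 mat"
  shows "A \<in> carrier_mat n m \<Longrightarrow> v \<in> carrier_vec m \<Longrightarrow> (c \<cdot>\<^sub>m A) *\<^sub>v v = c \<cdot>\<^sub>v (A *\<^sub>v v)"
  by (auto simp: vec_eq_iff)

lemma smult_vec_eq_0_iff:
  fixes v :: "'a :: field vec"
  shows "c \<noteq> 0 \<Longrightarrow> v \<in> carrier_vec n \<Longrightarrow> c \<cdot>\<^sub>v v = 0\<^sub>v n \<longleftrightarrow> v = 0\<^sub>v n"
  by (auto simp: vec_eq_iff)

lemma mult_unit_vec:
  fixes A :: "'a :: semiring_1 mat"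
  assumes "A \<in> carrier_mat n m" "j < m"
  shows "A *\<^sub>v unit_vec m j = col A j"
proof (rule eq_vecI)
  fix i assume "i < dim_vec (col A j)"
  then have i: "i < n" using assms by simp
  have "(A *\<^sub>v unit_vec m j) $ i = (\<Sum>l<m. if l = j then A $$ (i, j) else 0)"
    unfolding index_mult_mat_vec_sum[OF assms(1) unit_vec_carrier i] by (rule sum.cong) (auto simp: unit_vec_def)
  then show "(A *\<^sub>v unit_vec m j) $ i = col A j $ i" using i assms by simp
qed (use assms in simp)

lemma mult_mat_of_cols_single:
  assumes "M \<in> carrier_mat m n" "u \<in> carrier_vec n"
  shows "M * mat_of_cols n [u] = mat_of_cols m [M *\<^sub>v u]"
proof -
  have "vec n (($) u) = u" using assms(2) by (auto simp: vec_eq_iff)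
  then show ?thesis by (intro eq_matI) (use assms in \<open>auto simp: mat_of_cols_def\<close>)
qed

lemma mat_of_cols_single_smult:
  "u \<in> carrier_vec n \<Longrightarrow> mat_of_cols n [c \<cdot>\<^sub>v u] = c \<cdot>\<^sub>m mat_of_cols n [u]"
  by (auto simp: mat_eq_iff mat_of_cols_def)

lemma mat_of_cols_single_kernel:
  fixes u :: "'a :: field vec"
  assumes "u \<in> carrier_vec n" "u \<noteq> 0\<^sub>v n" "z \<in> carrier_vec 1" "mat_of_cols n [u] *\<^sub>v z = 0\<^sub>v n"
  shows "z = 0\<^sub>v 1"
proof -
  have "mat_of_cols n [u] *\<^sub>v z = z $ 0 \<cdot>\<^sub>v u"
    using assms(1,3) by (auto simp: vec_eq_iff mat_of_cols_def scalar_prod_def)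
  then have "z $ 0 = 0" using assms by (auto simp: vec_eq_iff)
  then show ?thesis using assms(3) by (auto simp: vec_eq_iff)
qed

lemma pow_mat_Suc_left:
  fixes A :: "'a :: semiring_1 mat"
  assumes "A \<in> carrier_mat n n"
  shows "A ^\<^sub>m Suc k = A * A ^\<^sub>m k"
proof (induction k)
  case (Suc k)
  have "A ^\<^sub>m Suc (Suc k) = (A * A ^\<^sub>m k) * A" using Suc by simp
  also have "\<dots> = A * A ^\<^sub>m Suc k" by (simp add: assoc_mult_mat[OF assms pow_carrier_mat[OF assms] assms])
  finally show ?case .
qed (use assms in simp)

lemma pow_mat_add:
  fixes A :: "'a :: semiring_1 mat"
  assumes "A \<in> carrier_mat n n"
  shows "A ^\<^sub>m (k + l) = A ^\<^sub>m k * A ^\<^sub>m l"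
  by (induction l) (use assms in \<open>simp_all add: assoc_mult_mat[of _ n n _ n _ n]\<close>)

lemma pow_mat_smult:
  fixes A :: "'a :: comm_semiring_1 mat"
  assumes "A \<in> carrier_mat n n"
  shows "(c \<cdot>\<^sub>m A) ^\<^sub>m k = c ^ k \<cdot>\<^sub>m A ^\<^sub>m k"
proof (induction k)
  case (Suc k)
  then show ?case
    using assms by (simp add: mult_smult_assoc_mat[of _ n n] mult_smult_distrib[of _ n n] mult.commute)
qed (use assms in \<open>auto simp: mat_eq_iff\<close>)

lemma pow_one_mat: "(1\<^sub>m n :: 'a :: semiring_1 mat) ^\<^sub>m k = 1\<^sub>m n"
  by (induction k) auto

lemma pow_mat_intertwine:
  fixes P :: "'a :: semiring_1 mat"
  assumes "P \<in> carrier_mat m n" "A \<in> carrier_mat n n" "B \<in> carrier_mat m m" "P * A = B * P"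
  shows "P * A ^\<^sub>m k = B ^\<^sub>m k * P"
proof (induction k)
  case (Suc k)
  have "P * A ^\<^sub>m Suc k = (P * A ^\<^sub>m k) * A"
    using assms(1,2) by (simp add: assoc_mult_mat[OF _ pow_carrier_mat])
  also have "\<dots> = B ^\<^sub>m k * (P * A)"
    using Suc assms(1-3) by (simp add: assoc_mult_mat[OF pow_carrier_mat])
  also have "\<dots> = B ^\<^sub>m Suc k * P"
    using assms by (simp add: assoc_mult_mat[OF pow_carrier_mat])
  finally show ?case .
qed (use assms in simp)

lemma pow_mat_q_commute_right:
  fixes A B :: "'a :: comm_semiring_1 mat"
  assumes "A \<in> carrier_mat n n" "B \<in> carrier_mat n n" "A * B = q \<cdot>\<^sub>m (B * A)"
  shows "A * B ^\<^sub>m k = q ^ k \<cdot>\<^sub>m (B ^\<^sub>m k * A)"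
proof -
  have "A * B = (q \<cdot>\<^sub>m B) * A" using assms by (simp add: mult_smult_assoc_mat)
  then have "A * B ^\<^sub>m k = (q \<cdot>\<^sub>m B) ^\<^sub>m k * A"
    using assms by (intro pow_mat_intertwine) auto
  then show ?thesis using assms by (simp add: pow_mat_smult mult_smult_assoc_mat[of _ n n])
qed

lemma pow_mat_q_commute_left:
  fixes A B :: "'a :: comm_semiring_1 mat"
  assumes "A \<in> carrier_mat n n" "B \<in> carrier_mat n n" "B * A = q \<cdot>\<^sub>m (A * B)"
  shows "B ^\<^sub>m k * A = q ^ k \<cdot>\<^sub>m (A * B ^\<^sub>m k)"
proof -
  have "A * (q \<cdot>\<^sub>m B) = B * A" using assms by (simp add: mult_smult_distrib)
  then have "A * (q \<cdot>\<^sub>m B) ^\<^sub>m k = B ^\<^sub>m k * A"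
    using assms by (intro pow_mat_intertwine) auto
  then show ?thesis using assms by (simp add: pow_mat_smult mult_smult_distrib[of _ n n _ n])
qed

lemma pow_mat_eigenvector:
  fixes E :: "'a :: comm_ring_1 mat"
  assumes "E \<in> carrier_mat n n" "v \<in> carrier_vec n" "E *\<^sub>v v = c \<cdot>\<^sub>v v"
  shows "E ^\<^sub>m k *\<^sub>v v = c ^ k \<cdot>\<^sub>v v"
proof (induction k)
  case (Suc k)
  have "E ^\<^sub>m Suc k *\<^sub>v v = E ^\<^sub>m k *\<^sub>v (E *\<^sub>v v)"
    using assms(1,2) by (simp add: assoc_mult_mat_vec[OF pow_carrier_mat])
  also have "\<dots> = E ^\<^sub>m k *\<^sub>v (c \<cdot>\<^sub>v v)" by (simp only: assms(3))
  also have "\<dots> = c \<cdot>\<^sub>v (E ^\<^sub>m k *\<^sub>v v)" using assms(1,2) by (intro eq_vecI) auto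
  finally show ?case using Suc by (auto simp: vec_eq_iff)
qed (use assms in auto)

definition vec_sum :: "nat \<Rightarrow> ('b \<Rightarrow> 'a :: comm_monoid_add vec) \<Rightarrow> 'b set \<Rightarrow> 'a vec" where
  "vec_sum n f A = vec n (\<lambda>i. \<Sum>x\<in>A. f x $ i)"

lemma vec_sum_carrier [simp]: "vec_sum n f A \<in> carrier_vec n"
  by (simp add: vec_sum_def)

lemma vec_sum_in_subspace:
  assumes "subspace_vec n W" "finite A" "\<And>x. x \<in> A \<Longrightarrow> f x \<in> W"
  shows "vec_sum n f A \<in> W"
  using assms(2,3)
proof (induction A rule: finite_induct)
  case empty
  have "vec_sum n f {} = 0\<^sub>v n" by (auto simp: vec_sum_def)
  then show ?case using assms(1) by (simp add: subspace_vec_def)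
next
  case (insert x A)
  have "f x \<in> carrier_vec n" using insert.prems assms(1) by (auto simp: subspace_vec_def)
  then have "vec_sum n f (insert x A) = f x + vec_sum n f A"
    using insert.hyps by (auto simp: vec_sum_def)
  then show ?case using insert assms(1) by (simp add: subspace_vec_def)
qed

lemma mult_mat_vec_sum:
  fixes M :: "'a :: comm_semiring_0 mat"
  assumes "M \<in> carrier_mat m n" "\<And>x. x \<in> A \<Longrightarrow> f x \<in> carrier_vec n"
  shows "M *\<^sub>v vec_sum n f A = vec_sum m (\<lambda>x. M *\<^sub>v f x) A"
proof (rule eq_vecI)
  fix i assume "i < dim_vec (vec_sum m (\<lambda>x. M *\<^sub>v f x) A)"
  then have i: "i < m" by (simp add: vec_sum_def)
  have "(M *\<^sub>v vec_sum n f A) $ i = (\<Sum>l<n. M $$ (i, l) * vec_sum n f A $ l)"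
    by (rule index_mult_mat_vec_sum[OF assms(1) vec_sum_carrier i])
  also have "\<dots> = (\<Sum>l<n. \<Sum>x\<in>A. M $$ (i, l) * f x $ l)"
    by (simp add: vec_sum_def sum_distrib_left)
  also have "\<dots> = (\<Sum>x\<in>A. \<Sum>l<n. M $$ (i, l) * f x $ l)"
    by (rule sum.swap)
  also have "\<dots> = (\<Sum>x\<in>A. (M *\<^sub>v f x) $ i)"
    using index_mult_mat_vec_sum[OF assms(1) assms(2) i] by simp
  finally show "(M *\<^sub>v vec_sum n f A) $ i = vec_sum m (\<lambda>x. M *\<^sub>v f x) A $ i"
    using i by (simp add: vec_sum_def)
qed (use assms in \<open>simp add: vec_sum_def\<close>)

lemma unit_vec_expansion:
  fixes v :: "'a :: comm_semiring_1 vec"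
  assumes "v \<in> carrier_vec n"
  shows "vec_sum n (\<lambda>j. v $ j \<cdot>\<^sub>v unit_vec n j) {..<n} = v"
  using assms by (auto simp: vec_eq_iff vec_sum_def unit_vec_def if_distrib cong: if_cong)

text \<open>Averaging the powers of E against a character isolates one summand of an
  eigenvector decomposition whose eigenvalues differ by N-th roots of unity.\<close>

lemma eigenvector_projection:
  fixes E :: "complex mat"
  assumes N: "N > 0" and lam: "lam \<noteq> 0" and E: "E \<in> carrier_mat n n" and p: "p < N"
    and w: "\<And>m. m < N \<Longrightarrow> w m \<in> carrier_vec n"
    and Ew: "\<And>m. m < N \<Longrightarrow> E *\<^sub>v w m = (lam * omega N ^ m) \<cdot>\<^sub>v w m"
  shows "vec_sum n (\<lambda>k. inverse ((lam * omega N ^ p) ^ k) \<cdot>\<^sub>v (E ^\<^sub>m k *\<^sub>v vec_sum n w {..<N})) {..<N}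
    = of_nat N \<cdot>\<^sub>v w p"
proof (rule eq_vecI)
  fix i assume "i < dim_vec (of_nat N \<cdot>\<^sub>v w p)"
  then have i: "i < n" using w[OF p] by simp
  have dim_w: "m < N \<Longrightarrow> dim_vec (w m) = n" for m using w carrier_vecD by metis
  have Ekw: "E ^\<^sub>m k *\<^sub>v vec_sum n w {..<N} = vec_sum n (\<lambda>m. (lam * omega N ^ m) ^ k \<cdot>\<^sub>v w m) {..<N}" for k
    using mult_mat_vec_sum[OF pow_carrier_mat[OF E], of "{..<N}" w] pow_mat_eigenvector[OF E w Ew]
    by (auto simp: vec_sum_def w)
  have "vec_sum n (\<lambda>k. inverse ((lam * omega N ^ p) ^ k) \<cdot>\<^sub>v (E ^\<^sub>m k *\<^sub>v vec_sum n w {..<N})) {..<N} $ i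
      = (\<Sum>k<N. inverse ((lam * omega N ^ p) ^ k) * (E ^\<^sub>m k *\<^sub>v vec_sum n w {..<N}) $ i)"
    using i E by (simp add: vec_sum_def)
  also have "\<dots> = (\<Sum>k<N. \<Sum>m<N. w m $ i * ((lam * omega N ^ m) ^ k / (lam * omega N ^ p) ^ k))"
    using i w unfolding Ekw
    by (auto simp: vec_sum_def sum_distrib_left divide_inverse ac_simps dim_w intro!: sum.cong)
  also have "\<dots> = (\<Sum>m<N. w m $ i * (\<Sum>k<N. (lam * omega N ^ m) ^ k / (lam * omega N ^ p) ^ k))"
    by (subst sum.swap) (simp add: sum_distrib_left)
  also have "\<dots> = (\<Sum>m<N. if m = p then of_nat N * w p $ i else 0)"
    by (rule sum.cong) (use N lam p in \<open>auto simp: sum_omega_character\<close>)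
  also have "\<dots> = (of_nat N \<cdot>\<^sub>v w p) $ i"
    using i p dim_w[OF p] by simp
  finally show "vec_sum n (\<lambda>k. inverse ((lam * omega N ^ p) ^ k) \<cdot>\<^sub>v (E ^\<^sub>m k *\<^sub>v vec_sum n w {..<N})) {..<N} $ i
    = (of_nat N \<cdot>\<^sub>v w p) $ i" .
qed (simp add: vec_sum_def carrier_vecD[OF w[OF p]])

lemma invertible_matE:
  assumes "invertible_mat P" "P \<in> carrier_mat n n"
  obtains B where "B \<in> carrier_mat n n" "P * B = 1\<^sub>m n" "B * P = 1\<^sub>m n"
proof -
  from assms obtain B where PB: "P * B = 1\<^sub>m (dim_row P)" and BP: "B * P = 1\<^sub>m (dim_row B)"
    unfolding invertible_mat_def inverts_mat_def by blast
  have "dim_col B = n" using arg_cong[OF PB, of dim_col] assms(2) by simp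
  moreover have "dim_row B = n" using arg_cong[OF BP, of dim_col] assms(2) by simp
  ultimately have B: "B \<in> carrier_mat n n" by auto
  show ?thesis using that[OF B] PB BP assms(2) B by simp
qed

lemma invertible_matI:
  assumes "P \<in> carrier_mat n n" "B \<in> carrier_mat n n" "P * B = 1\<^sub>m n" "B * P = 1\<^sub>m n"
  shows "invertible_mat P"
  using assms unfolding invertible_mat_def inverts_mat_def square_mat.simps by auto

lemma invertible_mat_if_kernel_trivial:
  fixes Q :: "'a :: field mat"
  assumes Q: "Q \<in> carrier_mat n n" and ker: "\<And>x. x \<in> carrier_vec n \<Longrightarrow> Q *\<^sub>v x = 0\<^sub>v n \<Longrightarrow> x = 0\<^sub>v n"
  shows "invertible_mat Q"
proof -
  have "det Q \<noteq> 0" using det_0_iff_vec_prod_zero[OF Q] ker by blast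
  from det_non_zero_imp_unit[OF Q this, of undefined]
  obtain B where "B \<in> carrier_mat n n" "B * Q = 1\<^sub>m n" "Q * B = 1\<^sub>m n"
    unfolding Units_def ring_mat_def by auto
  then show ?thesis using invertible_matI[OF Q] by blast
qed

lemma invertible_mat_if_pow_scalar:
  fixes M :: "'a :: field mat"
  assumes N: "N > 0" and M: "M \<in> carrier_mat n n" and MN: "M ^\<^sub>m N = c \<cdot>\<^sub>m 1\<^sub>m n" and c: "c \<noteq> 0"
  shows "invertible_mat M"
proof -
  let ?B = "inverse c \<cdot>\<^sub>m M ^\<^sub>m (N - 1)"
  have NN: "N = Suc (N - 1)" using N by simp
  have e1: "M * M ^\<^sub>m (N - 1) = M ^\<^sub>m N" using pow_mat_Suc_left[OF M, of "N - 1"] NN by simp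
  have e2: "M ^\<^sub>m (N - 1) * M = M ^\<^sub>m N" using NN by (metis pow_mat.simps(2))
  have "M * ?B = inverse c \<cdot>\<^sub>m (M * M ^\<^sub>m (N - 1))" by (rule mult_smult_distrib) (use M in auto)
  also have "\<dots> = 1\<^sub>m n" unfolding e1 MN using c by (auto simp: mat_eq_iff)
  finally have i1: "M * ?B = 1\<^sub>m n" .
  have "?B * M = inverse c \<cdot>\<^sub>m (M ^\<^sub>m (N - 1) * M)" by (rule mult_smult_assoc_mat) (use M in auto)
  also have "\<dots> = 1\<^sub>m n" unfolding e2 MN using c by (auto simp: mat_eq_iff)
  finally have i2: "?B * M = 1\<^sub>m n" .
  show ?thesis by (rule invertible_matI[OF M _ i1 i2]) (use M in simp)
qed

lemma invertible_pow_mat_kernel: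
  fixes M :: "'a :: field mat"
  assumes M: "invertible_mat M" "M \<in> carrier_mat n n"
  shows "v \<in> carrier_vec n \<Longrightarrow> M ^\<^sub>m k *\<^sub>v v = 0\<^sub>v n \<Longrightarrow> v = 0\<^sub>v n"
proof (induction k arbitrary: v)
  case (Suc k)
  obtain B where B: "B \<in> carrier_mat n n" "B * M = 1\<^sub>m n" using invertible_matE[OF M] by metis
  have "M ^\<^sub>m k *\<^sub>v (M *\<^sub>v v) = 0\<^sub>v n" using Suc.prems M(2) by (simp add: assoc_mult_mat_vec[OF pow_carrier_mat])
  then have "M *\<^sub>v v = 0\<^sub>v n" using Suc.IH M(2) Suc.prems(1) by simp
  then have "(B * M) *\<^sub>v v = 0\<^sub>v n" using assoc_mult_mat_vec[OF B(1) M(2) Suc.prems(1)] B(1) by auto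
  then show ?case using B Suc.prems(1) by simp
qed (use M(2) in auto)

lemma pow_mat_scalar_nonzero:
  fixes M :: "complex mat"
  assumes "invertible_mat M" "M \<in> carrier_mat n n" "n > 0" "M ^\<^sub>m k = c \<cdot>\<^sub>m 1\<^sub>m n"
  shows "c \<noteq> 0"
proof
  assume "c = 0"
  then have "M ^\<^sub>m k *\<^sub>v unit_vec n 0 = 0\<^sub>v n" unfolding assms(4) by (auto simp: vec_eq_iff)
  then show False using invertible_pow_mat_kernel[OF assms(1,2) unit_vec_carrier] unit_vec_nonzero[OF assms(3)] by blast
qed

lemma scalar_mat_if_conjugate:
  fixes P :: "'a :: comm_ring_1 mat"
  assumes P: "P \<in> carrier_mat n n" "invertible_mat P" and A: "A \<in> carrier_mat n n"
    and PA: "P * A = (c \<cdot>\<^sub>m 1\<^sub>m n) * P"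
  shows "A = c \<cdot>\<^sub>m 1\<^sub>m n"
proof -
  obtain B where B: "B \<in> carrier_mat n n" "B * P = 1\<^sub>m n" using invertible_matE[OF P(2,1)] by metis
  have "A = (B * P) * A" using A B by simp
  also have "\<dots> = B * (P * A)" by (rule assoc_mult_mat[OF B(1) P(1) A])
  also have "\<dots> = B * (c \<cdot>\<^sub>m P)" unfolding PA using P by (simp add: mult_smult_assoc_mat[of "1\<^sub>m n" n n P n])
  also have "\<dots> = c \<cdot>\<^sub>m (B * P)" by (rule mult_smult_distrib[OF B(1) P(1)])
  finally show ?thesis using B by simp
qed

lemma conjugate_scalar_mats_eq:
  fixes P :: "complex mat"
  assumes "n > 0" "P \<in> carrier_mat n n" "invertible_mat P" "P * (c \<cdot>\<^sub>m 1\<^sub>m n) = (d \<cdot>\<^sub>m 1\<^sub>m n) * P"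
  shows "c = d"
  using scalar_mat_if_conjugate[OF assms(2,3) _ assms(4)] smult_one_mat_inj[OF assms(1)] by simp

subsection \<open>Dimension via the trace\<close>

definition trace_mat :: "'a :: comm_semiring_0 mat \<Rightarrow> 'a" where
  "trace_mat A = (\<Sum>i<dim_row A. A $$ (i, i))"

lemma trace_mat_mult_commute:
  fixes A :: "'a :: comm_semiring_0 mat"
  assumes "A \<in> carrier_mat n m" "B \<in> carrier_mat m n"
  shows "trace_mat (A * B) = trace_mat (B * A)"
proof -
  have "trace_mat (A * B) = (\<Sum>i<n. (A * B) $$ (i, i))"
    using assms by (simp add: trace_mat_def)
  also have "\<dots> = (\<Sum>i<n. \<Sum>l<m. A $$ (i, l) * B $$ (l, i))"
    using index_mult_mat_sum[OF assms] by simp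
  also have "\<dots> = (\<Sum>l<m. \<Sum>i<n. B $$ (l, i) * A $$ (i, l))"
    by (subst sum.swap) (simp add: mult.commute)
  also have "\<dots> = (\<Sum>l<m. (B * A) $$ (l, l))"
    using index_mult_mat_sum[OF assms(2,1)] by simp
  also have "\<dots> = trace_mat (B * A)"
    using assms by (simp add: trace_mat_def)
  finally show ?thesis .
qed

lemma trace_one_mat [simp]: "trace_mat (1\<^sub>m n :: 'a :: comm_semiring_1 mat) = of_nat n"
  by (simp add: trace_mat_def)

lemma dim_eq_if_mutually_inverse:
  fixes Q :: "'a :: {comm_semiring_1, semiring_char_0} mat"
  assumes "Q \<in> carrier_mat n m" "R \<in> carrier_mat m n" "Q * R = 1\<^sub>m n" "R * Q = 1\<^sub>m m"
  shows "n = m"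
  using trace_mat_mult_commute[OF assms(1,2)] assms(3,4) by simp

lemma right_inverse_if_surjective:
  fixes Q :: "'a :: semiring_1 mat"
  assumes Q: "Q \<in> carrier_mat n m" and surj: "\<And>w. w \<in> carrier_vec n \<Longrightarrow> \<exists>x\<in>carrier_vec m. Q *\<^sub>v x = w"
  obtains R where "R \<in> carrier_mat m n" "Q * R = 1\<^sub>m n"
proof -
  define X where "X i = (SOME x. x \<in> carrier_vec m \<and> Q *\<^sub>v x = unit_vec n i)" for i
  have X: "X i \<in> carrier_vec m \<and> Q *\<^sub>v X i = unit_vec n i" for i
  proof -
    have "\<exists>x. x \<in> carrier_vec m \<and> Q *\<^sub>v x = unit_vec n i" using surj[OF unit_vec_carrier] by blast
    then show ?thesis unfolding X_def by (rule someI_ex)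
  qed
  define R where "R = mat m n (\<lambda>(k, i). X i $ k)"
  have R: "R \<in> carrier_mat m n" by (simp add: R_def)
  have colR: "col R i = X i" if "i < n" for i
    using X[of i] that by (auto simp: R_def vec_eq_iff)
  have "Q * R = 1\<^sub>m n"
  proof (rule eq_matI)
    fix i j assume "i < dim_row (1\<^sub>m n :: 'a mat)" "j < dim_col (1\<^sub>m n :: 'a mat)"
    then have i: "i < n" and j: "j < n" by auto
    have "(Q * R) $$ (i, j) = col (Q * R) j $ i" using Q R i j by simp
    also have "\<dots> = (Q *\<^sub>v X j) $ i" using col_mult2[OF Q R j] colR[OF j] by simp
    finally show "(Q * R) $$ (i, j) = 1\<^sub>m n $$ (i, j)" using X[of j] i j by simp
  qed (use Q R in auto)
  then show ?thesis using that R by blast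
qed

lemma dim_eq_if_bijective_mat:
  fixes Q :: "'a :: field_char_0 mat"
  assumes Q: "Q \<in> carrier_mat n m"
    and inj: "\<And>x. x \<in> carrier_vec m \<Longrightarrow> Q *\<^sub>v x = 0\<^sub>v n \<Longrightarrow> x = 0\<^sub>v m"
    and surj: "\<And>w. w \<in> carrier_vec n \<Longrightarrow> \<exists>x\<in>carrier_vec m. Q *\<^sub>v x = w"
  shows "n = m"
proof -
  obtain R where R: "R \<in> carrier_mat m n" and QR: "Q * R = 1\<^sub>m n"
    using right_inverse_if_surjective[OF Q surj] by blast
  have Qeq: "x = y" if xy: "x \<in> carrier_vec m" "y \<in> carrier_vec m" and e: "Q *\<^sub>v x = Q *\<^sub>v y" for x y
  proof -
    have "Q *\<^sub>v (x - y) = 0\<^sub>v n" using e mult_minus_distrib_mat_vec[OF Q xy] Q xy by auto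
    then have "x - y = 0\<^sub>v m" using inj xy by simp
    then show ?thesis using xy by (auto simp: vec_eq_iff)
  qed
  have RQ: "R * Q = 1\<^sub>m m"
  proof (rule eq_matI)
    fix i j assume "i < dim_row (1\<^sub>m m :: 'a mat)" "j < dim_col (1\<^sub>m m :: 'a mat)"
    then have i: "i < m" and j: "j < m" by auto
    have cQ: "col Q j \<in> carrier_vec n" unfolding carrier_vec_def using Q by simp
    have "Q *\<^sub>v (R *\<^sub>v col Q j) = (Q * R) *\<^sub>v col Q j" using Q R cQ by simp
    also have "\<dots> = Q *\<^sub>v unit_vec m j" unfolding QR using cQ mult_unit_vec[OF Q j] by simp
    finally have RcQ: "R *\<^sub>v col Q j = unit_vec m j" using Qeq R cQ by simp
    have "(R * Q) $$ (i, j) = col (R * Q) j $ i" using Q R i j by simp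
    also have "\<dots> = unit_vec m j $ i" using col_mult2[OF R Q j] RcQ by simp
    finally show "(R * Q) $$ (i, j) = 1\<^sub>m m $$ (i, j)" using i j by simp
  qed (use Q R in auto)
  show ?thesis by (rule dim_eq_if_mutually_inverse[OF Q R QR RQ])
qed

lemma intertwiner_inverse:
  fixes P :: "'a :: semiring_1 mat"
  assumes "P \<in> carrier_mat n n" "B \<in> carrier_mat n n" "P * B = 1\<^sub>m n" "B * P = 1\<^sub>m n"
    and "X \<in> carrier_mat n n" "X' \<in> carrier_mat n n" "P * X = X' * P"
  shows "B * X' = X * B"
proof -
  have "X * B = (B * P) * X * B" using assms by simp
  also have "\<dots> = B * (P * X) * B" using assms(1,2,5) by (simp add: assoc_mult_mat[of _ n n _ n _ n])
  also have "\<dots> = B * (X' * P) * B" using assms by simp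
  also have "\<dots> = B * X' * (P * B)" using assms(1,2,6) by (simp add: assoc_mult_mat[of _ n n _ n _ n])
  also have "\<dots> = B * X'" unfolding assms(3) using assms by simp
  finally show ?thesis by (rule sym)
qed

lemma equiv_rep_sym:
  assumes "E \<in> carrier_mat n n" "D \<in> carrier_mat n n" "E' \<in> carrier_mat n n" "D' \<in> carrier_mat n n"
    and "equiv_rep n E D n E' D'"
  shows "equiv_rep n E' D' n E D"
proof -
  from assms(5) obtain P where P: "P \<in> carrier_mat n n" "invertible_mat P" "P * E = E' * P" "P * D = D' * P"
    unfolding equiv_rep_def by auto
  obtain B where B: "B \<in> carrier_mat n n" "P * B = 1\<^sub>m n" "B * P = 1\<^sub>m n" using invertible_matE[OF P(2,1)] .
  show ?thesis
    unfolding equiv_rep_def using invertible_matI[OF B(1) P(1) B(3,2)] B(1) assms(1-4)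
      intertwiner_inverse[OF P(1) B(1-3)] P(3,4) by auto
qed

lemma equiv_rep_trans:
  assumes "E \<in> carrier_mat n n" "D \<in> carrier_mat n n" "E' \<in> carrier_mat n n" "D' \<in> carrier_mat n n"
    and "E'' \<in> carrier_mat n n" "D'' \<in> carrier_mat n n"
    and "equiv_rep n E D n E' D'" "equiv_rep n E' D' n E'' D''"
  shows "equiv_rep n E D n E'' D''"
proof -
  from assms(7) obtain P where P: "P \<in> carrier_mat n n" "invertible_mat P" "P * E = E' * P" "P * D = D' * P"
    unfolding equiv_rep_def by auto
  from assms(8) obtain R where R: "R \<in> carrier_mat n n" "invertible_mat R" "R * E' = E'' * R" "R * D' = D'' * R"
    unfolding equiv_rep_def by auto
  obtain P' where P': "P' \<in> carrier_mat n n" "P * P' = 1\<^sub>m n" "P' * P = 1\<^sub>m n" using invertible_matE[OF P(2,1)] .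
  obtain R' where R': "R' \<in> carrier_mat n n" "R * R' = 1\<^sub>m n" "R' * R = 1\<^sub>m n" using invertible_matE[OF R(2,1)] .
  have a: "(R * P) * (P' * R') = R * (P * P') * R'" "(P' * R') * (R * P) = P' * (R' * R) * P"
    using P(1) R(1) P'(1) R'(1) by (simp_all add: assoc_mult_mat[of _ n n _ n _ n])
  have "(R * P) * (P' * R') = 1\<^sub>m n" "(P' * R') * (R * P) = 1\<^sub>m n"
    unfolding a P'(2) R'(3) using P R P' R' by simp_all
  then have inv: "invertible_mat (R * P)"
    using P R P' R' by (intro invertible_matI[of _ n "P' * R'"]) auto
  have comm: "(R * P) * X = X'' * (R * P)"
    if "X \<in> carrier_mat n n" "X' \<in> carrier_mat n n" "X'' \<in> carrier_mat n n"
      "P * X = X' * P" "R * X' = X'' * R" for X X' X''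
  proof -
    have "(R * P) * X = R * (X' * P)" using that P(1) R(1) by simp
    also have "\<dots> = (R * X') * P" using that(2) P(1) R(1) by (simp add: assoc_mult_mat[of R n n X' n P n])
    also have "\<dots> = (X'' * R) * P" using that by simp
    finally show ?thesis using that P(1) R(1) by simp
  qed
  show ?thesis
    unfolding equiv_rep_def using inv mult_carrier_mat[OF R(1) P(1)]
      comm[OF assms(1,3,5) P(3) R(3)] comm[OF assms(2,4,6) P(4) R(4)] by blast
qed

section \<open>Kronecker products\<close>

lemma kron_carrier [simp]:
  "A \<in> carrier_mat a b \<Longrightarrow> B \<in> carrier_mat c d \<Longrightarrow> kron A B \<in> carrier_mat (a * c) (b * d)"
  by (auto simp: kron_def)

lemma dim_kron [simp]:
  "dim_row (kron A B) = dim_row A * dim_row B" "dim_col (kron A B) = dim_col A * dim_col B"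
  by (simp_all add: kron_def)

lemma index_kron:
  assumes "A \<in> carrier_mat a b" "B \<in> carrier_mat c d" "i < a * c" "j < b * d"
  shows "kron A B $$ (i, j) = A $$ (i div c, j div d) * B $$ (i mod c, j mod d)"
  using assms by (auto simp: kron_def)

lemma div_mod_less_of_less_mult:
  fixes i a b :: nat
  assumes "i < a * b"
  shows "i div b < a" "i mod b < b"
proof -
  have "b > 0" using assms by (cases b) auto
  then show "i div b < a" "i mod b < b" using assms by (auto simp: less_mult_imp_div_less)
qed

lemma kron_mult_kron:
  assumes A: "A \<in> carrier_mat a1 a2" and C: "C \<in> carrier_mat a2 a3"
    and B: "B \<in> carrier_mat b1 b2" and D: "D \<in> carrier_mat b2 b3"
  shows "kron A B * kron C D = kron (A * C) (B * D)"
proof (rule eq_matI)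
  fix i j assume "i < dim_row (kron (A * C) (B * D))" "j < dim_col (kron (A * C) (B * D))"
  then have i: "i < a1 * b1" and j: "j < a3 * b3" using A B C D by (auto simp: kron_def)
  note id = div_mod_less_of_less_mult[OF i] div_mod_less_of_less_mult[OF j]
  have "(kron A B * kron C D) $$ (i, j) = (\<Sum>l<a2 * b2. kron A B $$ (i, l) * kron C D $$ (l, j))"
    by (rule index_mult_mat_sum[OF kron_carrier[OF A B] kron_carrier[OF C D] i j])
  also have "\<dots> = (\<Sum>c<a2. \<Sum>m<b2. (A $$ (i div b1, c) * C $$ (c, j div b3))
      * (B $$ (i mod b1, m) * D $$ (m, j mod b3)))"
    unfolding sum_lessThan_mult_blocks
  proof (intro sum.cong refl)
    fix c m assume c: "c \<in> {..<a2}" and m: "m \<in> {..<b2}"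
    have cm: "c * b2 + m < a2 * b2" using c m by (simp add: block_index_less)
    have "(c * b2 + m) div b2 = c" "(c * b2 + m) mod b2 = m" using m by auto
    then show "kron A B $$ (i, c * b2 + m) * kron C D $$ (c * b2 + m, j)
      = (A $$ (i div b1, c) * C $$ (c, j div b3)) * (B $$ (i mod b1, m) * D $$ (m, j mod b3))"
      using index_kron[OF A B i cm] index_kron[OF C D cm j] by (simp add: mult_ac)
  qed
  also have "\<dots> = (A * C) $$ (i div b1, j div b3) * (B * D) $$ (i mod b1, j mod b3)"
    using index_mult_mat_sum[OF A C id(1,3)] index_mult_mat_sum[OF B D id(2,4)]
    by (simp add: sum_product)
  also have "\<dots> = kron (A * C) (B * D) $$ (i, j)"
    using index_kron[OF mult_carrier_mat[OF A C] mult_carrier_mat[OF B D] i j] by simp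
  finally show "(kron A B * kron C D) $$ (i, j) = kron (A * C) (B * D) $$ (i, j)" .
qed (use A B C D in \<open>auto simp: kron_def\<close>)

lemma kron_one_mat: "kron (1\<^sub>m m) (1\<^sub>m n) = 1\<^sub>m (m * n)"
proof (rule eq_matI)
  fix i j assume "i < dim_row (1\<^sub>m (m * n) :: complex mat)" "j < dim_col (1\<^sub>m (m * n) :: complex mat)"
  then have i: "i < m * n" and j: "j < m * n" by auto
  show "kron (1\<^sub>m m) (1\<^sub>m n) $$ (i, j) = 1\<^sub>m (m * n) $$ (i, j)"
    using index_kron[OF one_carrier_mat one_carrier_mat i j] i j
      div_mod_less_of_less_mult[OF i] div_mod_less_of_less_mult[OF j] nat_eq_iff_div_mod_eq[of i j n]
    by auto
qed (auto simp: kron_def)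

lemma kron_smult_left:
  assumes "A \<in> carrier_mat a b" "B \<in> carrier_mat c d"
  shows "kron (k \<cdot>\<^sub>m A) B = k \<cdot>\<^sub>m kron A B"
proof (rule eq_matI)
  fix i j assume "i < dim_row (k \<cdot>\<^sub>m kron A B)" "j < dim_col (k \<cdot>\<^sub>m kron A B)"
  then have i: "i < a * c" and j: "j < b * d" using assms by (auto simp: kron_def)
  show "kron (k \<cdot>\<^sub>m A) B $$ (i, j) = (k \<cdot>\<^sub>m kron A B) $$ (i, j)"
    using index_kron[OF assms i j] index_kron[OF smult_carrier_mat[OF assms(1)] assms(2) i j] i j assms
      div_mod_less_of_less_mult[OF i] div_mod_less_of_less_mult[OF j] by (simp add: mult.assoc)
qed (use assms in auto)

lemma kron_smult_right:
  assumes "A \<in> carrier_mat a b" "B \<in> carrier_mat c d"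
  shows "kron A (k \<cdot>\<^sub>m B) = k \<cdot>\<^sub>m kron A B"
proof (rule eq_matI)
  fix i j assume "i < dim_row (k \<cdot>\<^sub>m kron A B)" "j < dim_col (k \<cdot>\<^sub>m kron A B)"
  then have i: "i < a * c" and j: "j < b * d" using assms by (auto simp: kron_def)
  show "kron A (k \<cdot>\<^sub>m B) $$ (i, j) = (k \<cdot>\<^sub>m kron A B) $$ (i, j)"
    using index_kron[OF assms i j] index_kron[OF assms(1) smult_carrier_mat[OF assms(2)] i j] i j assms
      div_mod_less_of_less_mult[OF i] div_mod_less_of_less_mult[OF j] by (simp add: mult.assoc)
qed (use assms in auto)

lemma kron_pow_mat:
  assumes "A \<in> carrier_mat m m" "B \<in> carrier_mat n n"
  shows "kron A B ^\<^sub>m k = kron (A ^\<^sub>m k) (B ^\<^sub>m k)"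
  by (induction k) (use assms in \<open>simp_all add: kron_one_mat kron_mult_kron[of _ m m _ m _ n n _ n]\<close>)

lemma tensor_carrier [simp]:
  assumes "E1 \<in> carrier_mat m m" "D1 \<in> carrier_mat m m" "E2 \<in> carrier_mat n n" "D2 \<in> carrier_mat n n"
  shows "tensor_E E1 E2 \<in> carrier_mat (m * n) (m * n)" "tensor_D E1 D1 E2 D2 \<in> carrier_mat (m * n) (m * n)"
  using assms by (auto simp: tensor_E_def tensor_D_def)

section \<open>The q-binomial theorem\<close>

fun q_binomial :: "'a :: comm_ring_1 \<Rightarrow> nat \<Rightarrow> nat \<Rightarrow> 'a" where
  "q_binomial q 0 k = (if k = 0 then 1 else 0)"
| "q_binomial q (Suc n) 0 = 1"
| "q_binomial q (Suc n) (Suc k) = q_binomial q n (Suc k) + q ^ (n - k) * q_binomial q n k"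

lemma q_binomial_0_right [simp]: "q_binomial q n 0 = 1"
  by (cases n) auto

lemma q_binomial_eq_0: "n < k \<Longrightarrow> q_binomial q n k = 0"
proof (induction n arbitrary: k)
  case (Suc n) then show ?case by (cases k) auto
qed simp

lemma q_binomial_diag [simp]: "q_binomial q n n = 1"
  by (induction n) (auto simp: q_binomial_eq_0)

lemma q_binomial_mult_prod:
  "q_binomial q n k * (\<Prod>j<k. 1 - q ^ (j + 1)) = (\<Prod>j<k. 1 - q ^ (n - j))"
proof (induction n arbitrary: k)
  case 0
  then show ?case
  proof (cases k)
    case (Suc k')
    have "(\<Prod>j<Suc k'. 1 - q ^ (0 - j)) = 0" by (subst prod.lessThan_Suc_shift) simp
    then show ?thesis using Suc by simp
  qed simp
next
  case (Suc n)
  show ?case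
  proof (cases k)
    case (Suc m)
    let ?P = "\<lambda>k. \<Prod>j<k. 1 - q ^ (j + 1)" and ?R = "\<lambda>n k. \<Prod>j<k. 1 - q ^ (n - j)"
    have "q_binomial q (Suc n) (Suc m) * ?P (Suc m)
        = q_binomial q n (Suc m) * ?P (Suc m) + q ^ (n - m) * (1 - q ^ (m + 1)) * (q_binomial q n m * ?P m)"
      by (simp add: algebra_simps)
    also have "\<dots> = ?R n (Suc m) + q ^ (n - m) * (1 - q ^ (m + 1)) * ?R n m"
      using Suc.IH[of "Suc m"] Suc.IH[of m] by (simp only:)
    also have "\<dots> = ?R n m * ((1 - q ^ (n - m)) + q ^ (n - m) * (1 - q ^ (m + 1)))"
      by (simp add: algebra_simps)
    also have "\<dots> = ?R n m * (1 - q ^ Suc n)"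
    proof (cases "m \<le> n")
      case True
      then have "n - m + (m + 1) = Suc n" by simp
      then have "q ^ (n - m) * q ^ (m + 1) = q ^ Suc n" by (metis power_add)
      then show ?thesis by (simp add: algebra_simps)
    next
      case False
      then have "?R n m = 0" by (intro prod_zero bexI[of _ n]) auto
      then show ?thesis by simp
    qed
    also have "\<dots> = ?R (Suc n) (Suc m)" by (subst prod.lessThan_Suc_shift) (simp add: mult.commute)
    finally show ?thesis using Suc by simp
  qed simp
qed

lemma q_binomial_omega_eq_0:
  assumes "0 < k" "k < N"
  shows "q_binomial (omega N) N k = 0"
proof -
  have N: "N > 0" using assms by simp
  have R: "(\<Prod>j<k. 1 - omega N ^ (N - j)) = 0"
    using assms omega_power_N[OF N] by (intro prod_zero bexI[of _ 0]) auto
  have "omega N ^ (j + 1) \<noteq> 1" if "j < k" for j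
    using omega_power_inj[OF N, of "j + 1" 0] that assms by auto
  then have "(\<Prod>j<k. 1 - omega N ^ (j + 1)) \<noteq> 0" by (simp add: prod_zero_iff del: power_Suc)
  then show ?thesis using q_binomial_mult_prod[of "omega N" N k] R by (metis mult_eq_0_iff)
qed

lemma q_commute_mult_step:
  fixes A B :: "'a :: comm_ring_1 mat"
  assumes A: "A \<in> carrier_mat d d" and B: "B \<in> carrier_mat d d" and BA: "B * A = q \<cdot>\<^sub>m (A * B)"
    and k: "k \<le> n"
  shows "A ^\<^sub>m k * B ^\<^sub>m (n - k) * (A + B)
    = q ^ (n - k) \<cdot>\<^sub>m (A ^\<^sub>m Suc k * B ^\<^sub>m (Suc n - Suc k)) + A ^\<^sub>m k * B ^\<^sub>m (Suc n - k)"
proof -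
  have Ak: "A ^\<^sub>m k \<in> carrier_mat d d" and Bk: "B ^\<^sub>m (n - k) \<in> carrier_mat d d" using A B by auto
  have "A ^\<^sub>m k * B ^\<^sub>m (n - k) * A = A ^\<^sub>m k * (B ^\<^sub>m (n - k) * A)" by (rule assoc_mult_mat[OF Ak Bk A])
  also have "\<dots> = A ^\<^sub>m k * (q ^ (n - k) \<cdot>\<^sub>m (A * B ^\<^sub>m (n - k)))"
    unfolding pow_mat_q_commute_left[OF A B BA] ..
  also have "\<dots> = q ^ (n - k) \<cdot>\<^sub>m (A ^\<^sub>m Suc k * B ^\<^sub>m (Suc n - Suc k))"
    using Ak A Bk by (simp add: mult_smult_distrib[OF Ak mult_carrier_mat[OF A Bk]] assoc_mult_mat[OF Ak A Bk])
  finally have eqA: "A ^\<^sub>m k * B ^\<^sub>m (n - k) * A = \<dots>" .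
  have eqB: "A ^\<^sub>m k * B ^\<^sub>m (n - k) * B = A ^\<^sub>m k * B ^\<^sub>m (Suc n - k)"
    using Ak Bk B k by (simp add: Suc_diff_le assoc_mult_mat[OF Ak Bk B])
  have "A ^\<^sub>m k * B ^\<^sub>m (n - k) * (A + B) = A ^\<^sub>m k * B ^\<^sub>m (n - k) * A + A ^\<^sub>m k * B ^\<^sub>m (n - k) * B"
    by (rule mult_add_distrib_mat[OF mult_carrier_mat[OF Ak Bk] A B])
  then show ?thesis by (simp only: eqA eqB)
qed

lemma q_binomial_theorem_mat:
  fixes A B :: "'a :: comm_ring_1 mat"
  assumes A: "A \<in> carrier_mat d d" and B: "B \<in> carrier_mat d d" and BA: "B * A = q \<cdot>\<^sub>m (A * B)"
    and i: "i < d" and j: "j < d"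
  shows "((A + B) ^\<^sub>m n) $$ (i, j) = (\<Sum>k\<le>n. q_binomial q n k * (A ^\<^sub>m k * B ^\<^sub>m (n - k)) $$ (i, j))"
  using i j
proof (induction n arbitrary: i j)
  case 0 then show ?case using A B by simp
next
  case (Suc n)
  let ?M = "\<lambda>k. A ^\<^sub>m k * B ^\<^sub>m (n - k)"
  let ?F = "\<lambda>k. (A ^\<^sub>m k * B ^\<^sub>m (Suc n - k)) $$ (i, j)"
  have AB: "A + B \<in> carrier_mat d d" using A B by simp
  have M: "?M k \<in> carrier_mat d d" for k by (rule mult_carrier_mat[OF pow_carrier_mat[OF A] pow_carrier_mat[OF B]])
  have step: "(?M k * (A + B)) $$ (i, j) = q ^ (n - k) * ?F (Suc k) + ?F k" if "k \<le> n" for k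
    using q_commute_mult_step[OF A B BA that] Suc.prems A B by simp
  have "((A + B) ^\<^sub>m Suc n) $$ (i, j) = (\<Sum>l<d. ((A + B) ^\<^sub>m n) $$ (i, l) * (A + B) $$ (l, j))"
    using index_mult_mat_sum[OF pow_carrier_mat[OF AB] AB Suc.prems] by simp
  also have "\<dots> = (\<Sum>k\<le>n. q_binomial q n k * (\<Sum>l<d. ?M k $$ (i, l) * (A + B) $$ (l, j)))"
    using Suc.IH Suc.prems
    by (simp add: sum_distrib_right sum_distrib_left mult.assoc sum.swap[of _ "{..<d}"])
  also have "\<dots> = (\<Sum>k\<le>n. q_binomial q n k * (q ^ (n - k) * ?F (Suc k) + ?F k))"
    using index_mult_mat_sum[OF M AB Suc.prems] step by simp
  also have "\<dots> = (\<Sum>k\<le>n. q ^ (n - k) * q_binomial q n k * ?F (Suc k)) + (\<Sum>k\<le>Suc n. q_binomial q n k * ?F k)"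
    using q_binomial_eq_0[of n "Suc n" q] by (simp add: algebra_simps sum.distrib)
  also have "\<dots> = q_binomial q (Suc n) 0 * ?F 0 + (\<Sum>k\<le>n. q_binomial q (Suc n) (Suc k) * ?F (Suc k))"
    by (subst sum.atMost_Suc_shift) (simp add: algebra_simps sum.distrib)
  also have "\<dots> = (\<Sum>k\<le>Suc n. q_binomial q (Suc n) k * ?F k)"
    by (subst sum.atMost_Suc_shift) simp
  finally show ?case .
qed

text \<open>At a primitive N-th root of unity all inner q-binomial coefficients vanish.\<close>

lemma pow_mat_add_omega_commuting:
  fixes A B :: "complex mat"
  assumes N: "N > 0" and A: "A \<in> carrier_mat d d" and B: "B \<in> carrier_mat d d"
    and BA: "B * A = omega N \<cdot>\<^sub>m (A * B)"
  shows "(A + B) ^\<^sub>m N = A ^\<^sub>m N + B ^\<^sub>m N"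
proof (rule eq_matI)
  fix i j assume "i < dim_row (A ^\<^sub>m N + B ^\<^sub>m N)" "j < dim_col (A ^\<^sub>m N + B ^\<^sub>m N)"
  then have i: "i < d" and j: "j < d" using A B N by auto
  let ?f = "\<lambda>k. q_binomial (omega N) N k * (A ^\<^sub>m k * B ^\<^sub>m (N - k)) $$ (i, j)"
  have "((A + B) ^\<^sub>m N) $$ (i, j) = (\<Sum>k\<le>N. ?f k)" by (rule q_binomial_theorem_mat[OF A B BA i j])
  also have "\<dots> = (\<Sum>k\<in>{0, N}. ?f k)"
    by (rule sum.mono_neutral_right) (auto simp: q_binomial_omega_eq_0)
  also have "\<dots> = (A ^\<^sub>m N + B ^\<^sub>m N) $$ (i, j)" using N A B i j by simp
  finally show "((A + B) ^\<^sub>m N) $$ (i, j) = (A ^\<^sub>m N + B ^\<^sub>m N) $$ (i, j)" .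
qed (use A B in auto)

section \<open>Standard representations\<close>

lemma std_carrier [simp]: "std_E N a y \<in> carrier_mat N N" "std_D N a y \<in> carrier_mat N N"
  by (auto simp: std_E_def std_D_def Z_mat_def X_mat_def)

lemma dim_std [simp]:
  "dim_row (std_E N a y) = N" "dim_col (std_E N a y) = N" "dim_row (std_D N a y) = N" "dim_col (std_D N a y) = N"
  by (auto simp: std_E_def std_D_def Z_mat_def X_mat_def)

lemma index_std_E [simp]:
  "i < N \<Longrightarrow> j < N \<Longrightarrow> std_E N a y $$ (i, j) = (if i = j then a^2 * omega N ^ i else 0)"
  by (simp add: std_E_def Z_mat_def)

lemma index_std_D [simp]:
  "i < N \<Longrightarrow> j < N \<Longrightarrow> std_D N a y $$ (i, j) = (if i = (j + 1) mod N then a * y else 0)"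
  by (simp add: std_D_def X_mat_def)

lemma std_E_pow:
  "std_E N a y ^\<^sub>m k = mat N N (\<lambda>(i, j). if i = j then (a^2 * omega N ^ i) ^ k else 0)"
proof (induction k)
  case (Suc k)
  show ?case
  proof (rule eq_matI)
    fix i j assume "i < dim_row (mat N N (\<lambda>(i, j). if i = j then (a^2 * omega N ^ i) ^ Suc k else 0))"
      "j < dim_col (mat N N (\<lambda>(i, j). if i = j then (a^2 * omega N ^ i) ^ Suc k else (0 :: complex)))"
    then have i: "i < N" and j: "j < N" by auto
    have "(std_E N a y ^\<^sub>m Suc k) $$ (i, j) = (\<Sum>l<N. (std_E N a y ^\<^sub>m k) $$ (i, l) * std_E N a y $$ (l, j))"
      using index_mult_mat_sum[OF pow_carrier_mat[OF std_carrier(1)] std_carrier(1) i j] by simp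
    also have "\<dots> = (\<Sum>l<N. if l = j then (if i = j then (a^2 * omega N ^ i) ^ Suc k else 0) else 0)"
      by (rule sum.cong) (use i j Suc in auto)
    finally show "(std_E N a y ^\<^sub>m Suc k) $$ (i, j)
      = mat N N (\<lambda>(i, j). if i = j then (a^2 * omega N ^ i) ^ Suc k else 0) $$ (i, j)"
      using i j by simp
  qed auto
qed (auto simp: mat_eq_iff)

lemma std_D_pow:
  assumes "N > 0"
  shows "std_D N a y ^\<^sub>m k = mat N N (\<lambda>(i, j). if i = (j + k) mod N then (a * y) ^ k else 0)"
proof (induction k)
  case (Suc k)
  show ?case
  proof (rule eq_matI)
    fix i j assume "i < dim_row (mat N N (\<lambda>(i, j). if i = (j + Suc k) mod N then (a * y) ^ Suc k else 0))"
      "j < dim_col (mat N N (\<lambda>(i, j). if i = (j + Suc k) mod N then (a * y) ^ Suc k else (0 :: complex)))"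
    then have i: "i < N" and j: "j < N" by auto
    have e: "((j + 1) mod N + k) mod N = (j + Suc k) mod N" by (simp add: mod_add_left_eq)
    have "(std_D N a y ^\<^sub>m Suc k) $$ (i, j) = (\<Sum>l<N. (std_D N a y ^\<^sub>m k) $$ (i, l) * std_D N a y $$ (l, j))"
      using index_mult_mat_sum[OF pow_carrier_mat[OF std_carrier(2)] std_carrier(2) i j] by simp
    also have "\<dots> = (\<Sum>l<N. if l = (j + 1) mod N then (if i = (j + Suc k) mod N then (a * y) ^ Suc k else 0) else 0)"
      by (rule sum.cong) (use i j e Suc in auto)
    finally show "(std_D N a y ^\<^sub>m Suc k) $$ (i, j)
      = mat N N (\<lambda>(i, j). if i = (j + Suc k) mod N then (a * y) ^ Suc k else 0) $$ (i, j)"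
      using i j assms by simp
  qed auto
qed (auto simp: mat_eq_iff)

lemma std_E_pow_N: "N > 0 \<Longrightarrow> std_E N a y ^\<^sub>m N = a ^ (2 * N) \<cdot>\<^sub>m 1\<^sub>m N"
  unfolding std_E_pow by (auto simp: mat_eq_iff power_mult_distrib omega_power_power_N power_mult)

lemma std_D_pow_N: "N > 0 \<Longrightarrow> std_D N a y ^\<^sub>m N = (a * y) ^ N \<cdot>\<^sub>m 1\<^sub>m N"
  unfolding std_D_pow by (auto simp: mat_eq_iff)

lemma std_E_mult_index:
  assumes "M \<in> carrier_mat N n" "i < N" "j < n"
  shows "(std_E N a y * M) $$ (i, j) = a^2 * omega N ^ i * M $$ (i, j)"
proof -
  have "(std_E N a y * M) $$ (i, j) = (\<Sum>l<N. if l = i then a^2 * omega N ^ i * M $$ (i, j) else 0)"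
    unfolding index_mult_mat_sum[OF std_carrier(1) assms] by (rule sum.cong) (use assms(2) in auto)
  then show ?thesis using assms(2) by simp
qed

lemma mult_std_E_index:
  assumes "M \<in> carrier_mat n N" "i < n" "j < N"
  shows "(M * std_E N a y) $$ (i, j) = M $$ (i, j) * (a^2 * omega N ^ j)"
proof -
  have "(M * std_E N a y) $$ (i, j) = (\<Sum>l<N. if l = j then M $$ (i, j) * (a^2 * omega N ^ j) else 0)"
    unfolding index_mult_mat_sum[OF assms(1) std_carrier(1) assms(2,3)] by (rule sum.cong) (use assms(3) in auto)
  then show ?thesis using assms(3) by simp
qed

lemma std_commute:
  assumes "N > 0"
  shows "std_E N a y * std_D N a y = omega N \<cdot>\<^sub>m (std_D N a y * std_E N a y)"
proof (rule eq_matI)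
  fix i j assume "i < dim_row (omega N \<cdot>\<^sub>m (std_D N a y * std_E N a y))"
    "j < dim_col (omega N \<cdot>\<^sub>m (std_D N a y * std_E N a y))"
  then have i: "i < N" and j: "j < N" by auto
  have "omega N ^ ((j + 1) mod N) = omega N * omega N ^ j" using omega_power_mod[OF assms, of "j + 1"] by simp
  then show "(std_E N a y * std_D N a y) $$ (i, j) = (omega N \<cdot>\<^sub>m (std_D N a y * std_E N a y)) $$ (i, j)"
    using i j std_E_mult_index[OF std_carrier(2) i j] mult_std_E_index[OF std_carrier(2) i j] by auto
qed auto

lemma std_cyclic_rep:
  assumes "N > 0" "a \<noteq> 0" "y \<noteq> 0"
  shows "cyclic_rep N N (std_E N a y) (std_D N a y)"
proof -
  have "invertible_mat (std_E N a y)" "invertible_mat (std_D N a y)"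
    using invertible_mat_if_pow_scalar[OF assms(1) std_carrier(1) std_E_pow_N[OF assms(1)]]
      invertible_mat_if_pow_scalar[OF assms(1) std_carrier(2) std_D_pow_N[OF assms(1)]] assms by auto
  then show ?thesis unfolding cyclic_rep_def is_rep_def using std_commute[OF assms(1)] by auto
qed

lemma std_E_mult_unit_vec:
  "m < N \<Longrightarrow> std_E N a y *\<^sub>v unit_vec N m = (a^2 * omega N ^ m) \<cdot>\<^sub>v unit_vec N m"
  by (auto simp: mult_unit_vec[OF std_carrier(1)] vec_eq_iff)

lemma std_D_pow_mult_unit_vec:
  assumes "N > 0" "m < N"
  shows "std_D N a y ^\<^sub>m k *\<^sub>v unit_vec N m = (a * y) ^ k \<cdot>\<^sub>v unit_vec N ((m + k) mod N)"
  using assms by (auto simp: mult_unit_vec[OF pow_carrier_mat[OF std_carrier(2)]] vec_eq_iff std_D_pow)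

section \<open>Cyclic bases\<close>

lemma diag_copies_carrier [simp]: "A \<in> carrier_mat N N \<Longrightarrow> diag_copies r A \<in> carrier_mat (r * N) (r * N)"
  by (auto simp: diag_copies_def)

lemma dim_diag_copies [simp]:
  "dim_row (diag_copies r A) = r * dim_row A" "dim_col (diag_copies r A) = r * dim_col A"
  by (simp_all add: diag_copies_def)

lemma index_diag_copies:
  "A \<in> carrier_mat N N \<Longrightarrow> i < r * N \<Longrightarrow> j < r * N \<Longrightarrow>
   diag_copies r A $$ (i, j) = (if i div N = j div N then A $$ (i mod N, j mod N) else 0)"
  by (auto simp: diag_copies_def)

lemma diag_copies_1: "A \<in> carrier_mat N N \<Longrightarrow> diag_copies 1 A = A"
  by (auto simp: diag_copies_def mat_eq_iff)

lemma index_diag_std_E: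
  assumes "N > 0" "l < r * N" "j < r * N"
  shows "diag_copies r (std_E N a y) $$ (l, j) = (if l = j then a^2 * omega N ^ (j mod N) else 0)"
  using assms by (auto simp: index_diag_copies[of "std_E N a y" N] nat_eq_iff_div_mod_eq[of l j N])

lemma index_diag_std_D:
  assumes "N > 0" "l < r * N" "j < r * N"
  shows "diag_copies r (std_D N a y) $$ (l, j) = (if l = j div N * N + (j mod N + 1) mod N then a * y else 0)"
proof -
  let ?j = "j div N * N + (j mod N + 1) mod N"
  have "?j div N = j div N" "?j mod N = (j mod N + 1) mod N" using assms(1) by auto
  then have "l = ?j \<longleftrightarrow> l div N = j div N \<and> l mod N = (j mod N + 1) mod N"
    using nat_eq_iff_div_mod_eq[of l ?j N] by simp
  then show ?thesis using assms by (auto simp: index_diag_copies[of "std_D N a y" N])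
qed

lemma mult_diag_std_E_index:
  assumes N: "N > 0" and Q: "Q \<in> carrier_mat n (r * N)" and i: "i < n" and j: "j < r * N"
  shows "(Q * diag_copies r (std_E N a y)) $$ (i, j) = Q $$ (i, j) * (a^2 * omega N ^ (j mod N))"
proof -
  have "(Q * diag_copies r (std_E N a y)) $$ (i, j)
      = (\<Sum>l<r * N. if l = j then Q $$ (i, j) * (a^2 * omega N ^ (j mod N)) else 0)"
    unfolding index_mult_mat_sum[OF Q diag_copies_carrier[OF std_carrier(1)] i j]
    by (rule sum.cong) (use N j in \<open>auto simp: index_diag_std_E\<close>)
  then show ?thesis using j by simp
qed

lemma mult_diag_std_D_index:
  assumes N: "N > 0" and Q: "Q \<in> carrier_mat n (r * N)" and i: "i < n" and j: "j < r * N"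
  shows "(Q * diag_copies r (std_D N a y)) $$ (i, j) = Q $$ (i, j div N * N + (j mod N + 1) mod N) * (a * y)"
proof -
  let ?j = "j div N * N + (j mod N + 1) mod N"
  have j': "?j < r * N"
    using N j by (intro block_index_less) (auto simp: less_mult_imp_div_less)
  have "(Q * diag_copies r (std_D N a y)) $$ (i, j) = (\<Sum>l<r * N. if l = ?j then Q $$ (i, ?j) * (a * y) else 0)"
    unfolding index_mult_mat_sum[OF Q diag_copies_carrier[OF std_carrier(2)] i j]
    by (rule sum.cong) (use N j in \<open>auto simp: index_diag_std_D\<close>)
  then show ?thesis using j' by simp
qed

lemma D_pow_shifts_eigenvalue:
  assumes E: "E \<in> carrier_mat n n" and D: "D \<in> carrier_mat n n" and U: "U \<in> carrier_mat n r"
    and ED: "E * D = omega N \<cdot>\<^sub>m (D * E)" and EU: "E * U = a^2 \<cdot>\<^sub>m U"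
  shows "E * (D ^\<^sub>m m * U) = (a^2 * omega N ^ m) \<cdot>\<^sub>m (D ^\<^sub>m m * U)"
proof -
  have Dm: "D ^\<^sub>m m \<in> carrier_mat n n" using D by simp
  have "E * (D ^\<^sub>m m * U) = (E * D ^\<^sub>m m) * U" using E Dm U by simp
  also have "\<dots> = (omega N ^ m \<cdot>\<^sub>m (D ^\<^sub>m m * E)) * U" unfolding pow_mat_q_commute_right[OF E D ED] ..
  also have "\<dots> = omega N ^ m \<cdot>\<^sub>m (D ^\<^sub>m m * (E * U))"
    using E Dm U by (simp add: mult_smult_assoc_mat[of _ n n _ r])
  also have "\<dots> = (a^2 * omega N ^ m) \<cdot>\<^sub>m (D ^\<^sub>m m * U)"
    unfolding EU using Dm U by (simp add: mult_smult_distrib[OF Dm U] mult.commute)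
  finally show ?thesis .
qed

lemma D_pow_mult_vec_eigenvector:
  assumes E: "E \<in> carrier_mat n n" and D: "D \<in> carrier_mat n n" and U: "U \<in> carrier_mat n r"
    and ED: "E * D = omega N \<cdot>\<^sub>m (D * E)" and EU: "E * U = a^2 \<cdot>\<^sub>m U" and z: "z \<in> carrier_vec r"
  shows "E *\<^sub>v (c \<cdot>\<^sub>v ((D ^\<^sub>m m * U) *\<^sub>v z)) = (a^2 * omega N ^ m) \<cdot>\<^sub>v (c \<cdot>\<^sub>v ((D ^\<^sub>m m * U) *\<^sub>v z))"
proof -
  have DU: "D ^\<^sub>m m * U \<in> carrier_mat n r" using D U by (intro mult_carrier_mat) auto
  have "E *\<^sub>v ((D ^\<^sub>m m * U) *\<^sub>v z) = (E * (D ^\<^sub>m m * U)) *\<^sub>v z"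
    using assoc_mult_mat_vec[OF E DU z] by simp
  also have "\<dots> = (a^2 * omega N ^ m) \<cdot>\<^sub>v ((D ^\<^sub>m m * U) *\<^sub>v z)"
    unfolding D_pow_shifts_eigenvalue[OF E D U ED EU] by (rule smult_mat_mult_vec[OF DU z])
  finally show ?thesis
    using mult_mat_vec[OF E mult_mat_vec_carrier[OF DU z]] by (simp add: smult_smult_assoc mult.commute)
qed

definition cyclic_basis_mat :: "nat \<Rightarrow> complex \<Rightarrow> complex mat \<Rightarrow> complex mat \<Rightarrow> complex mat" where
  "cyclic_basis_mat N t D U = mat (dim_row U) (dim_col U * N)
     (\<lambda>(i, j). (D ^\<^sub>m (j mod N) * U) $$ (i, j div N) / t ^ (j mod N))"

lemma cyclic_basis_mat_carrier [simp]:
  "U \<in> carrier_mat n r \<Longrightarrow> cyclic_basis_mat N t D U \<in> carrier_mat n (r * N)"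
  by (auto simp: cyclic_basis_mat_def)

lemma dim_cyclic_basis_mat [simp]:
  "dim_row (cyclic_basis_mat N t D U) = dim_row U" "dim_col (cyclic_basis_mat N t D U) = dim_col U * N"
  by (simp_all add: cyclic_basis_mat_def)

lemma mult_cyclic_basis_mat_index:
  assumes M: "M \<in> carrier_mat n n" and D: "D \<in> carrier_mat n n" and U: "U \<in> carrier_mat n r"
    and i: "i < n" and j: "j < r * N"
  shows "(M * cyclic_basis_mat N t D U) $$ (i, j) = (M * (D ^\<^sub>m (j mod N) * U)) $$ (i, j div N) / t ^ (j mod N)"
proof -
  have jd: "j div N < r" using j by (simp add: less_mult_imp_div_less)
  have DU: "D ^\<^sub>m (j mod N) * U \<in> carrier_mat n r" using D U by (intro mult_carrier_mat) auto
  show ?thesis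
    unfolding index_mult_mat_sum[OF M cyclic_basis_mat_carrier[OF U] i j] index_mult_mat_sum[OF M DU i jd]
    using U j jd by (simp add: cyclic_basis_mat_def sum_divide_distrib)
qed

lemma cyclic_basis_mat_intertwines_E:
  assumes N: "N > 0" and E: "E \<in> carrier_mat n n" and D: "D \<in> carrier_mat n n" and U: "U \<in> carrier_mat n r"
    and ED: "E * D = omega N \<cdot>\<^sub>m (D * E)" and EU: "E * U = a^2 \<cdot>\<^sub>m U"
  shows "E * cyclic_basis_mat N t D U = cyclic_basis_mat N t D U * diag_copies r (std_E N a y)"
proof (rule eq_matI)
  fix i j assume "i < dim_row (cyclic_basis_mat N t D U * diag_copies r (std_E N a y))"
    "j < dim_col (cyclic_basis_mat N t D U * diag_copies r (std_E N a y))"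
  then have i: "i < n" and j: "j < r * N" using U by (auto simp: cyclic_basis_mat_def diag_copies_def)
  have jd: "j div N < r" using j by (simp add: less_mult_imp_div_less)
  show "(E * cyclic_basis_mat N t D U) $$ (i, j) = (cyclic_basis_mat N t D U * diag_copies r (std_E N a y)) $$ (i, j)"
    unfolding mult_cyclic_basis_mat_index[OF E D U i j] mult_diag_std_E_index[OF N cyclic_basis_mat_carrier[OF U] i j]
      D_pow_shifts_eigenvalue[OF E D U ED EU]
    using i j jd U D by (simp add: cyclic_basis_mat_def)
qed (use E U in auto)

lemma cyclic_basis_mat_intertwines_D:
  assumes N: "N > 0" and D: "D \<in> carrier_mat n n" and U: "U \<in> carrier_mat n r"
    and DU: "D ^\<^sub>m N * U = t ^ N \<cdot>\<^sub>m U" and a: "a \<noteq> 0" and t: "t \<noteq> 0"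
  shows "D * cyclic_basis_mat N t D U = cyclic_basis_mat N t D U * diag_copies r (std_D N a (t / a))"
proof (rule eq_matI)
  fix i j assume "i < dim_row (cyclic_basis_mat N t D U * diag_copies r (std_D N a (t / a)))"
    "j < dim_col (cyclic_basis_mat N t D U * diag_copies r (std_D N a (t / a)))"
  then have i: "i < n" and j: "j < r * N" using U by (auto simp: cyclic_basis_mat_def diag_copies_def)
  define c m where "c = j div N" and "m = j mod N"
  have c: "c < r" and m: "m < N" using j N by (auto simp: c_def m_def less_mult_imp_div_less)
  have next_lt: "c * N + (m + 1) mod N < r * N" using c N by (simp add: block_index_less)
  have "D * (D ^\<^sub>m m * U) = (D * D ^\<^sub>m m) * U" by (rule assoc_mult_mat[OF D pow_carrier_mat[OF D] U, symmetric])
  also have "D * D ^\<^sub>m m = D ^\<^sub>m Suc m" by (rule pow_mat_Suc_left[OF D, symmetric])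
  finally have "D * (D ^\<^sub>m m * U) = D ^\<^sub>m Suc m * U" .
  then have lhs: "(D * cyclic_basis_mat N t D U) $$ (i, j) = (D ^\<^sub>m Suc m * U) $$ (i, c) / t ^ m"
    using mult_cyclic_basis_mat_index[OF D D U i j] by (simp add: c_def m_def)
  have rhs: "(cyclic_basis_mat N t D U * diag_copies r (std_D N a (t / a))) $$ (i, j)
      = (D ^\<^sub>m ((m + 1) mod N) * U) $$ (i, c) / t ^ ((m + 1) mod N) * t"
    using mult_diag_std_D_index[OF N cyclic_basis_mat_carrier[OF U] i j] i next_lt c m U a
    by (simp add: cyclic_basis_mat_def c_def m_def)
  show "(D * cyclic_basis_mat N t D U) $$ (i, j) = (cyclic_basis_mat N t D U * diag_copies r (std_D N a (t / a))) $$ (i, j)"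
  proof (cases "Suc m < N")
    case True
    then show ?thesis unfolding lhs rhs using t by (simp add: field_simps)
  next
    case False
    then have "Suc m = N" using m by simp
    then have "(D ^\<^sub>m Suc m * U) $$ (i, c) = t ^ N * U $$ (i, c)" "t ^ N = t * t ^ m" "(m + 1) mod N = 0"
      using DU i c U by (simp_all flip: power_Suc)
    then show ?thesis unfolding lhs rhs using t U i c D by simp
  qed
qed (use D U in auto)

lemma cyclic_basis_mat_mult_vec:
  assumes N: "N > 0" and D: "D \<in> carrier_mat n n" and U: "U \<in> carrier_mat n r" and x: "x \<in> carrier_vec (r * N)"
  shows "cyclic_basis_mat N t D U *\<^sub>v x
    = vec_sum n (\<lambda>m. inverse (t ^ m) \<cdot>\<^sub>v ((D ^\<^sub>m m * U) *\<^sub>v vec r (\<lambda>c. x $ (c * N + m)))) {..<N}"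
proof (rule eq_vecI)
  fix i assume "i < dim_vec (vec_sum n (\<lambda>m. inverse (t ^ m) \<cdot>\<^sub>v ((D ^\<^sub>m m * U) *\<^sub>v vec r (\<lambda>c. x $ (c * N + m)))) {..<N})"
  then have i: "i < n" by (simp add: vec_sum_def)
  have DU: "D ^\<^sub>m m * U \<in> carrier_mat n r" for m using D U by (intro mult_carrier_mat) auto
  have "(cyclic_basis_mat N t D U *\<^sub>v x) $ i
      = (\<Sum>c<r. \<Sum>m<N. cyclic_basis_mat N t D U $$ (i, c * N + m) * x $ (c * N + m))"
    unfolding index_mult_mat_vec_sum[OF cyclic_basis_mat_carrier[OF U] x i] sum_lessThan_mult_blocks ..
  also have "\<dots> = (\<Sum>c<r. \<Sum>m<N. inverse (t ^ m) * ((D ^\<^sub>m m * U) $$ (i, c) * x $ (c * N + m)))"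
    using U i by (intro sum.cong refl) (simp add: cyclic_basis_mat_def block_index_less divide_inverse)
  also have "\<dots> = (\<Sum>m<N. inverse (t ^ m) * ((D ^\<^sub>m m * U) *\<^sub>v vec r (\<lambda>c. x $ (c * N + m))) $ i)"
    by (subst sum.swap) (simp add: index_mult_mat_vec_sum[OF DU _ i] sum_distrib_left)
  finally show "(cyclic_basis_mat N t D U *\<^sub>v x) $ i
    = vec_sum n (\<lambda>m. inverse (t ^ m) \<cdot>\<^sub>v ((D ^\<^sub>m m * U) *\<^sub>v vec r (\<lambda>c. x $ (c * N + m)))) {..<N} $ i"
    using i D by (simp add: vec_sum_def)
qed (use U in \<open>simp add: vec_sum_def\<close>)

lemma D_orbit_vanishes_imp_zero:
  fixes D U :: "complex mat"
  assumes N: "N > 0" and D: "D \<in> carrier_mat n n" and U: "U \<in> carrier_mat n r"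
    and DU: "D ^\<^sub>m N * U = t ^ N \<cdot>\<^sub>m U" and t: "t \<noteq> 0"
    and Uinj: "\<And>z. z \<in> carrier_vec r \<Longrightarrow> U *\<^sub>v z = 0\<^sub>v n \<Longrightarrow> z = 0\<^sub>v r"
    and m: "m < N" and z: "z \<in> carrier_vec r" and Dz: "(D ^\<^sub>m m * U) *\<^sub>v z = 0\<^sub>v n"
  shows "z = 0\<^sub>v r"
proof -
  have Uz: "U *\<^sub>v z \<in> carrier_vec n" using U z by simp
  have "D ^\<^sub>m N = D ^\<^sub>m (N - m) * D ^\<^sub>m m" using pow_mat_add[OF D, of "N - m" m] m by simp
  then have "D ^\<^sub>m N *\<^sub>v (U *\<^sub>v z) = D ^\<^sub>m (N - m) *\<^sub>v ((D ^\<^sub>m m * U) *\<^sub>v z)"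
    using assoc_mult_mat_vec[OF pow_carrier_mat[OF D] pow_carrier_mat[OF D] Uz]
      assoc_mult_mat_vec[OF pow_carrier_mat[OF D] U z] by simp
  also have "\<dots> = 0\<^sub>v n" using Dz D by auto
  finally have "(D ^\<^sub>m N * U) *\<^sub>v z = 0\<^sub>v n" using assoc_mult_mat_vec[OF pow_carrier_mat[OF D] U z] by simp
  then have "(t ^ N \<cdot>\<^sub>m U) *\<^sub>v z = 0\<^sub>v n" unfolding DU .
  moreover have "(t ^ N \<cdot>\<^sub>m U) *\<^sub>v z = t ^ N \<cdot>\<^sub>v (U *\<^sub>v z)" by (rule smult_mat_mult_vec[OF U z])
  ultimately have "U *\<^sub>v z = 0\<^sub>v n" using t Uz by (auto simp: vec_eq_iff)
  then show ?thesis using Uinj z by simp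
qed

lemma cyclic_basis_mat_kernel:
  assumes N: "N > 0" and E: "E \<in> carrier_mat n n" and D: "D \<in> carrier_mat n n" and U: "U \<in> carrier_mat n r"
    and ED: "E * D = omega N \<cdot>\<^sub>m (D * E)" and EU: "E * U = a^2 \<cdot>\<^sub>m U"
    and DU: "D ^\<^sub>m N * U = t ^ N \<cdot>\<^sub>m U" and a: "a \<noteq> 0" and t: "t \<noteq> 0"
    and Uinj: "\<And>z. z \<in> carrier_vec r \<Longrightarrow> U *\<^sub>v z = 0\<^sub>v n \<Longrightarrow> z = 0\<^sub>v r"
    and x: "x \<in> carrier_vec (r * N)" and Qx: "cyclic_basis_mat N t D U *\<^sub>v x = 0\<^sub>v n"
  shows "x = 0\<^sub>v (r * N)"
proof -
  define z where "z m = vec r (\<lambda>c. x $ (c * N + m))" for m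
  define w where "w m = inverse (t ^ m) \<cdot>\<^sub>v ((D ^\<^sub>m m * U) *\<^sub>v z m)" for m
  have DU_carrier: "D ^\<^sub>m m * U \<in> carrier_mat n r" for m using D U by (intro mult_carrier_mat) auto
  have w: "w m \<in> carrier_vec n" for m
    unfolding w_def smult_carrier_vec by (rule mult_mat_vec_carrier[OF DU_carrier]) (simp add: z_def)
  have Ew: "E *\<^sub>v w m = (a^2 * omega N ^ m) \<cdot>\<^sub>v w m" for m
    unfolding w_def by (rule D_pow_mult_vec_eigenvector[OF E D U ED EU]) (simp add: z_def)
  have sum_w: "vec_sum n w {..<N} = 0\<^sub>v n"
    using Qx cyclic_basis_mat_mult_vec[OF N D U x] by (simp add: w_def[abs_def] z_def[abs_def])
  have w0: "w p = 0\<^sub>v n" if p: "p < N" for p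
  proof -
    have "of_nat N \<cdot>\<^sub>v w p
        = vec_sum n (\<lambda>k. inverse ((a^2 * omega N ^ p) ^ k) \<cdot>\<^sub>v (E ^\<^sub>m k *\<^sub>v vec_sum n w {..<N})) {..<N}"
      using eigenvector_projection[OF N _ E p w Ew] a by simp
    also have "\<dots> = 0\<^sub>v n" unfolding sum_w using E by (auto simp: vec_sum_def vec_eq_iff)
    finally show ?thesis using N smult_vec_eq_0_iff[OF _ w, of "of_nat N"] by simp
  qed
  have z0: "z m = 0\<^sub>v r" if m: "m < N" for m
  proof -
    have "(D ^\<^sub>m m * U) *\<^sub>v z m = 0\<^sub>v n"
      using w0[OF m] t smult_vec_eq_0_iff[OF _ mult_mat_vec_carrier[OF DU_carrier], of "inverse (t ^ m)" "z m"]
      by (simp add: w_def z_def)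
    then show ?thesis using D_orbit_vanishes_imp_zero[OF N D U DU t Uinj m] by (simp add: z_def)
  qed
  show ?thesis
  proof (intro eq_vecI)
    fix j assume "j < dim_vec (0\<^sub>v (r * N) :: complex vec)"
    then have j: "j < r * N" by simp
    have "z (j mod N) $ (j div N) = 0" using z0 j N by (simp add: less_mult_imp_div_less)
    then show "x $ j = 0\<^sub>v (r * N) $ j" using j N by (simp add: z_def less_mult_imp_div_less mult.commute)
  qed (use x in simp)
qed

lemma cyclic_basis_equiv:
  assumes N: "N > 0" and E: "E \<in> carrier_mat (r * N) (r * N)" and D: "D \<in> carrier_mat (r * N) (r * N)"
    and U: "U \<in> carrier_mat (r * N) r"
    and ED: "E * D = omega N \<cdot>\<^sub>m (D * E)" and EU: "E * U = a^2 \<cdot>\<^sub>m U"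
    and DU: "D ^\<^sub>m N * U = t ^ N \<cdot>\<^sub>m U" and a: "a \<noteq> 0" and t: "t \<noteq> 0"
    and Uinj: "\<And>z. z \<in> carrier_vec r \<Longrightarrow> U *\<^sub>v z = 0\<^sub>v (r * N) \<Longrightarrow> z = 0\<^sub>v r"
  shows "equiv_rep (r * N) (diag_copies r (std_E N a (t / a))) (diag_copies r (std_D N a (t / a))) (r * N) E D"
proof -
  have Q: "cyclic_basis_mat N t D U \<in> carrier_mat (r * N) (r * N)" using U by simp
  have "invertible_mat (cyclic_basis_mat N t D U)"
    using cyclic_basis_mat_kernel[OF N E D U ED EU DU a t Uinj] by (intro invertible_mat_if_kernel_trivial[OF Q])
  then show ?thesis
    unfolding equiv_rep_def using Q cyclic_basis_mat_intertwines_E[OF N E D U ED EU]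
      cyclic_basis_mat_intertwines_D[OF N D U DU a t] by auto
qed

section \<open>Irreducibility and equivalence of standard representations\<close>

lemma subspace_vecD:
  assumes "subspace_vec n W"
  shows "W \<subseteq> carrier_vec n" "0\<^sub>v n \<in> W" "\<And>v w. v \<in> W \<Longrightarrow> w \<in> W \<Longrightarrow> v + w \<in> W"
    "\<And>c v. v \<in> W \<Longrightarrow> c \<cdot>\<^sub>v v \<in> W"
  using assms unfolding subspace_vec_def by blast+

lemma subspace_pow_mat_closed:
  assumes W: "subspace_vec n W" and M: "M \<in> carrier_mat n n" and MW: "\<And>v. v \<in> W \<Longrightarrow> M *\<^sub>v v \<in> W"
    and v: "v \<in> W"
  shows "M ^\<^sub>m k *\<^sub>v v \<in> W"
proof (induction k)
  case 0
  then show ?case using v subspace_vecD(1)[OF W] M by auto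
next
  case (Suc k)
  have vc: "v \<in> carrier_vec n" using v subspace_vecD(1)[OF W] by auto
  have "M ^\<^sub>m Suc k *\<^sub>v v = (M * M ^\<^sub>m k) *\<^sub>v v" by (simp only: pow_mat_Suc_left[OF M])
  also have "\<dots> = M *\<^sub>v (M ^\<^sub>m k *\<^sub>v v)" by (rule assoc_mult_mat_vec[OF M pow_carrier_mat[OF M] vc])
  finally show ?case using MW[OF Suc] by (simp only:)
qed

lemma std_invariant_subspace_has_unit_vec:
  assumes N: "N > 0" and a: "a \<noteq> 0" and inv: "invariant_subspace N (std_E N a y) (std_D N a y) W"
    and ne: "W \<noteq> {0\<^sub>v N}"
  obtains p where "p < N" "unit_vec N p \<in> W"
proof -
  have W: "subspace_vec N W" and EW: "\<And>v. v \<in> W \<Longrightarrow> std_E N a y *\<^sub>v v \<in> W"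
    using inv unfolding invariant_subspace_def by auto
  obtain v where v: "v \<in> W" "v \<noteq> 0\<^sub>v N" using ne subspace_vecD(2)[OF W] by blast
  have vc: "v \<in> carrier_vec N" using v subspace_vecD(1)[OF W] by auto
  obtain p where p: "p < N" "v $ p \<noteq> 0" using v(2) vc by (auto simp: vec_eq_iff)
  define w where "w m = v $ m \<cdot>\<^sub>v unit_vec N m" for m
  have Ew: "std_E N a y *\<^sub>v w m = (a^2 * omega N ^ m) \<cdot>\<^sub>v w m" if "m < N" for m
    using std_E_mult_unit_vec[OF that] mult_mat_vec[OF std_carrier(1) unit_vec_carrier]
    by (simp add: w_def smult_smult_assoc mult.commute)
  have vs: "vec_sum N w {..<N} = v" using unit_vec_expansion[OF vc] by (simp add: w_def[abs_def])
  have "vec_sum N (\<lambda>k. inverse ((a^2 * omega N ^ p) ^ k) \<cdot>\<^sub>v (std_E N a y ^\<^sub>m k *\<^sub>v vec_sum N w {..<N})) {..<N}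
      = of_nat N \<cdot>\<^sub>v w p"
    by (rule eigenvector_projection[OF N _ std_carrier(1) p(1) _ Ew]) (use a in \<open>auto simp: w_def\<close>)
  then have "of_nat N \<cdot>\<^sub>v w p
      = vec_sum N (\<lambda>k. inverse ((a^2 * omega N ^ p) ^ k) \<cdot>\<^sub>v (std_E N a y ^\<^sub>m k *\<^sub>v v)) {..<N}"
    unfolding vs by simp
  also have "\<dots> \<in> W"
    using W EW v by (intro vec_sum_in_subspace subspace_vecD(4)[OF W] subspace_pow_mat_closed) auto
  finally have "(of_nat N * v $ p) \<cdot>\<^sub>v unit_vec N p \<in> W" by (simp add: w_def smult_smult_assoc)
  then have "inverse (of_nat N * v $ p) \<cdot>\<^sub>v ((of_nat N * v $ p) \<cdot>\<^sub>v unit_vec N p) \<in> W"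
    by (rule subspace_vecD(4)[OF W])
  moreover have "inverse (of_nat N * v $ p) * (of_nat N * v $ p) = 1" using N p by (simp add: field_simps)
  ultimately show ?thesis using that p by (simp only: smult_smult_assoc one_smult_vec)
qed

lemma std_invariant_subspace_eq_carrier:
  assumes N: "N > 0" and a: "a \<noteq> 0" and y: "y \<noteq> 0"
    and inv: "invariant_subspace N (std_E N a y) (std_D N a y) W" and p: "p < N" and ep: "unit_vec N p \<in> W"
  shows "W = carrier_vec N"
proof -
  have W: "subspace_vec N W" and DW: "\<And>v. v \<in> W \<Longrightarrow> std_D N a y *\<^sub>v v \<in> W"
    using inv unfolding invariant_subspace_def by auto
  have unit: "unit_vec N j \<in> W" if j: "j < N" for j
  proof -
    have "(p + (j + N - p)) mod N = j" using j p by simp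
    then have "std_D N a y ^\<^sub>m (j + N - p) *\<^sub>v unit_vec N p = (a * y) ^ (j + N - p) \<cdot>\<^sub>v unit_vec N j"
      using std_D_pow_mult_unit_vec[OF N p] by simp
    then have "(a * y) ^ (j + N - p) \<cdot>\<^sub>v unit_vec N j \<in> W"
      using subspace_pow_mat_closed[OF W std_carrier(2) DW ep] by metis
    then have "inverse ((a * y) ^ (j + N - p)) \<cdot>\<^sub>v ((a * y) ^ (j + N - p) \<cdot>\<^sub>v unit_vec N j) \<in> W"
      by (rule subspace_vecD(4)[OF W])
    then show ?thesis using a y by (simp add: smult_smult_assoc)
  qed
  have "u \<in> W" if u: "u \<in> carrier_vec N" for u
    using vec_sum_in_subspace[OF W, of "{..<N}" "\<lambda>j. u $ j \<cdot>\<^sub>v unit_vec N j"] unit_vec_expansion[OF u]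
      subspace_vecD(4)[OF W unit] by simp
  then show ?thesis using subspace_vecD(1)[OF W] by blast
qed

lemma std_irreducible:
  assumes "N > 0" "a \<noteq> 0" "y \<noteq> 0"
  shows "irreducible_rep N N (std_E N a y) (std_D N a y)"
proof -
  have "W = carrier_vec N"
    if "invariant_subspace N (std_E N a y) (std_D N a y) W" "W \<noteq> {0\<^sub>v N}" for W
    using std_invariant_subspace_has_unit_vec[OF assms(1,2) that] std_invariant_subspace_eq_carrier[OF assms that(1)]
    by metis
  then show ?thesis
    using std_cyclic_rep[OF assms] assms(1) unfolding irreducible_rep_def cyclic_rep_def by blast
qed

lemma std_equiv_iff:
  assumes N: "N > 0" and a1: "a1 \<noteq> 0" and y1: "y1 \<noteq> 0" and a2: "a2 \<noteq> 0"
  shows "equiv_rep N (std_E N a1 y1) (std_D N a1 y1) N (std_E N a2 y2) (std_D N a2 y2)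
     \<longleftrightarrow> a1 ^ (2 * N) = a2 ^ (2 * N) \<and> a1 ^ N * y1 ^ N = a2 ^ N * y2 ^ N"
proof
  assume "equiv_rep N (std_E N a1 y1) (std_D N a1 y1) N (std_E N a2 y2) (std_D N a2 y2)"
  then obtain P where P: "P \<in> carrier_mat N N" "invertible_mat P"
    "P * std_E N a1 y1 = std_E N a2 y2 * P" "P * std_D N a1 y1 = std_D N a2 y2 * P"
    unfolding equiv_rep_def by auto
  have "P * std_E N a1 y1 ^\<^sub>m N = std_E N a2 y2 ^\<^sub>m N * P"
    by (rule pow_mat_intertwine[OF P(1) std_carrier(1) std_carrier(1) P(3)])
  then have "a1 ^ (2 * N) = a2 ^ (2 * N)"
    unfolding std_E_pow_N[OF N] by (rule conjugate_scalar_mats_eq[OF N P(1,2)])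
  moreover have "P * std_D N a1 y1 ^\<^sub>m N = std_D N a2 y2 ^\<^sub>m N * P"
    by (rule pow_mat_intertwine[OF P(1) std_carrier(2) std_carrier(2) P(4)])
  then have "(a1 * y1) ^ N = (a2 * y2) ^ N"
    unfolding std_D_pow_N[OF N] by (rule conjugate_scalar_mats_eq[OF N P(1,2)])
  ultimately show "a1 ^ (2 * N) = a2 ^ (2 * N) \<and> a1 ^ N * y1 ^ N = a2 ^ N * y2 ^ N"
    by (simp add: power_mult_distrib)
next
  assume h: "a1 ^ (2 * N) = a2 ^ (2 * N) \<and> a1 ^ N * y1 ^ N = a2 ^ N * y2 ^ N"
  have "(a1^2 / a2^2) ^ N = 1" using h a2 by (simp add: power_divide flip: power_mult)
  then obtain j where j: "j < N" "a1^2 / a2^2 = omega N ^ j" using root_of_unity_omega_power[OF N] by blast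
  then have a12: "a2^2 * omega N ^ j = a1^2" using a2 by (simp add: field_simps)
  let ?U = "mat_of_cols N [unit_vec N j]"
  have U1: "?U \<in> carrier_mat N 1" using mat_of_cols_carrier[of N "[unit_vec N j]"] by simp
  then have U: "?U \<in> carrier_mat (1 * N) 1" by simp
  have EU: "std_E N a2 y2 * ?U = a1^2 \<cdot>\<^sub>m ?U"
    using mult_mat_of_cols_single[OF std_carrier(1) unit_vec_carrier] std_E_mult_unit_vec[OF j(1)] a12
      mat_of_cols_single_smult[OF unit_vec_carrier] by simp
  have "std_D N a2 y2 ^\<^sub>m N * ?U = (a2 * y2) ^ N \<cdot>\<^sub>m ?U"
    unfolding std_D_pow_N[OF N] by (rule smult_one_mat_mult[OF U1])
  then have DU: "std_D N a2 y2 ^\<^sub>m N * ?U = (a1 * y1) ^ N \<cdot>\<^sub>m ?U"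
    using h by (simp add: power_mult_distrib)
  have "equiv_rep (1 * N) (diag_copies 1 (std_E N a1 (a1 * y1 / a1))) (diag_copies 1 (std_D N a1 (a1 * y1 / a1)))
      (1 * N) (std_E N a2 y2) (std_D N a2 y2)"
    using a1 y1 mat_of_cols_single_kernel[OF unit_vec_carrier unit_vec_nonzero[OF j(1)]]
    by (intro cyclic_basis_equiv[OF N _ _ U std_commute[OF N] EU DU]) auto
  then show "equiv_rep N (std_E N a1 y1) (std_D N a1 y1) N (std_E N a2 y2) (std_D N a2 y2)"
    using a1 by (simp only: diag_copies_1[OF std_carrier(1)] diag_copies_1[OF std_carrier(2)] mult_1) simp
qed

section \<open>Classification of irreducible cyclic representations\<close>

lemma eigenspace_invariant_subspace:
  fixes E D M :: "complex mat"
  assumes E: "E \<in> carrier_mat n n" "invertible_mat E" and D: "D \<in> carrier_mat n n"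
    and M: "M \<in> carrier_mat n n" and ME: "M * E = E * M" and MD: "M * D = D * M"
  shows "invariant_subspace n E D {v \<in> carrier_vec n. M *\<^sub>v v = c \<cdot>\<^sub>v v}"
proof -
  let ?W = "{v \<in> carrier_vec n. M *\<^sub>v v = c \<cdot>\<^sub>v v}"
  obtain Ei where Ei: "Ei \<in> carrier_mat n n" "E * Ei = 1\<^sub>m n" "Ei * E = 1\<^sub>m n" using invertible_matE[OF E(2,1)] .
  have MEi: "M * Ei = Ei * M" using intertwiner_inverse[OF E(1) Ei M M] ME by simp
  have closed: "A *\<^sub>v w \<in> ?W" if A: "A \<in> carrier_mat n n" and MA: "M * A = A * M" and w: "w \<in> ?W" for A w
  proof -
    have wc: "w \<in> carrier_vec n" using w by simp
    have "M *\<^sub>v (A *\<^sub>v w) = (M * A) *\<^sub>v w" using M A wc by simp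
    also have "\<dots> = A *\<^sub>v (M *\<^sub>v w)" unfolding MA using A M wc by simp
    also have "\<dots> = c \<cdot>\<^sub>v (A *\<^sub>v w)" using w mult_mat_vec[OF A wc] by simp
    finally show ?thesis using A wc by simp
  qed
  have "subspace_vec n ?W"
    unfolding subspace_vec_def using M
    by (auto simp: mult_add_distrib_mat_vec[OF M] smult_add_distrib_vec[of _ n] mult_mat_vec[OF M]
        smult_smult_assoc mult.commute)
  moreover have "\<exists>u\<in>?W. E *\<^sub>v u = w" if w: "w \<in> ?W" for w
  proof
    show "Ei *\<^sub>v w \<in> ?W" by (rule closed[OF Ei(1) MEi w])
    have "E *\<^sub>v (Ei *\<^sub>v w) = (E * Ei) *\<^sub>v w" by (rule assoc_mult_mat_vec[OF E(1) Ei(1), symmetric]) (use w in simp)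
    then show "E *\<^sub>v (Ei *\<^sub>v w) = w" using Ei(2) w by simp
  qed
  ultimately show ?thesis unfolding invariant_subspace_def using closed[OF E(1) ME] closed[OF D MD] by blast
qed

lemma irreducible_commuting_mat_scalar:
  fixes M :: "complex mat"
  assumes irr: "irreducible_rep N n E D" and M: "M \<in> carrier_mat n n"
    and ME: "M * E = E * M" and MD: "M * D = D * M"
    and v0: "v0 \<in> carrier_vec n" "v0 \<noteq> 0\<^sub>v n" "M *\<^sub>v v0 = c \<cdot>\<^sub>v v0"
  shows "M = c \<cdot>\<^sub>m 1\<^sub>m n"
proof -
  have E: "E \<in> carrier_mat n n" "invertible_mat E" and D: "D \<in> carrier_mat n n"
    using irr unfolding irreducible_rep_def is_rep_def by auto
  let ?W = "{v \<in> carrier_vec n. M *\<^sub>v v = c \<cdot>\<^sub>v v}"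
  have "\<forall>W. invariant_subspace n E D W \<longrightarrow> W = {0\<^sub>v n} \<or> W = carrier_vec n"
    using irr unfolding irreducible_rep_def by blast
  moreover have "?W \<noteq> {0\<^sub>v n}" using v0 by auto
  ultimately have W: "?W = carrier_vec n" using eigenspace_invariant_subspace[OF E D M ME MD, of c] by blast
  show ?thesis
  proof (rule eq_matI)
    fix i j assume "i < dim_row (c \<cdot>\<^sub>m 1\<^sub>m n)" "j < dim_col (c \<cdot>\<^sub>m 1\<^sub>m n)"
    then have i: "i < n" and j: "j < n" by auto
    have "unit_vec n j \<in> ?W" unfolding W by simp
    then have "col M j = c \<cdot>\<^sub>v unit_vec n j" using mult_unit_vec[OF M j] by simp
    from arg_cong[OF this, of "\<lambda>v. v $ i"] show "M $$ (i, j) = (c \<cdot>\<^sub>m 1\<^sub>m n) $$ (i, j)"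
      using i j M by simp
  qed (use M in auto)
qed

lemma irreducible_cyclic_D_pow_N_scalar:
  assumes N: "N > 0" and irr: "irreducible_rep N n E D" and cyc: "cyclic_rep N n E D"
  obtains c where "c \<noteq> 0" "D ^\<^sub>m N = c \<cdot>\<^sub>m 1\<^sub>m n"
proof -
  have E: "E \<in> carrier_mat n n" and D: "D \<in> carrier_mat n n" and ED: "E * D = omega N \<cdot>\<^sub>m (D * E)"
    and iD: "invertible_mat D" and n: "n > 0"
    using cyc irr unfolding cyclic_rep_def is_rep_def irreducible_rep_def by auto
  have M: "D ^\<^sub>m N \<in> carrier_mat n n" using D by simp
  have ME: "D ^\<^sub>m N * E = E * D ^\<^sub>m N" using pow_mat_q_commute_right[OF E D ED, of N] omega_power_N[OF N] by simp
  have MD: "D ^\<^sub>m N * D = D * D ^\<^sub>m N" using pow_mat_Suc_left[OF D, of N] by simp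
  obtain c where "c \<in> spectrum (D ^\<^sub>m N)" using spectrum_non_empty[OF M n] by blast
  then obtain v0 where v0: "v0 \<in> carrier_vec n" "v0 \<noteq> 0\<^sub>v n" "D ^\<^sub>m N *\<^sub>v v0 = c \<cdot>\<^sub>v v0"
    unfolding spectrum_def eigenvalue_def eigenvector_def using M by auto
  have DN: "D ^\<^sub>m N = c \<cdot>\<^sub>m 1\<^sub>m n" by (rule irreducible_commuting_mat_scalar[OF irr M ME MD v0])
  have "c \<noteq> 0" by (rule pow_mat_scalar_nonzero[OF iD D n DN])
  then show ?thesis using that DN by blast
qed

lemma subspace_vec_image:
  fixes Q :: "complex mat"
  assumes Q: "Q \<in> carrier_mat n m"
  shows "subspace_vec n {Q *\<^sub>v x | x. x \<in> carrier_vec m}"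
  unfolding subspace_vec_def
proof (intro conjI ballI allI subsetI)
  let ?W = "{Q *\<^sub>v x | x. x \<in> carrier_vec m}"
  show "0\<^sub>v n \<in> ?W" using Q by (auto intro!: exI[of _ "0\<^sub>v m"])
  fix v w assume "v \<in> ?W" "w \<in> ?W"
  then obtain x y where "x \<in> carrier_vec m" "v = Q *\<^sub>v x" "y \<in> carrier_vec m" "w = Q *\<^sub>v y" by blast
  then show "v + w \<in> ?W" using mult_add_distrib_mat_vec[OF Q] by (auto intro!: exI[of _ "x + y"])
next
  let ?W = "{Q *\<^sub>v x | x. x \<in> carrier_vec m}"
  fix c v assume "v \<in> ?W"
  then obtain x where "x \<in> carrier_vec m" "v = Q *\<^sub>v x" by blast
  then show "c \<cdot>\<^sub>v v \<in> ?W" using mult_mat_vec[OF Q] by (auto intro!: exI[of _ "c \<cdot>\<^sub>v x"])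
qed (use Q in auto)

lemma image_invariant_subspace:
  fixes Q :: "complex mat"
  assumes E: "E \<in> carrier_mat n n" and D: "D \<in> carrier_mat n n" and Q: "Q \<in> carrier_mat n m"
    and S: "S \<in> carrier_mat m m" "invertible_mat S" and T: "T \<in> carrier_mat m m"
    and EQ: "E * Q = Q * S" and DQ: "D * Q = Q * T"
  shows "invariant_subspace n E D {Q *\<^sub>v x | x. x \<in> carrier_vec m}"
proof -
  let ?W = "{Q *\<^sub>v x | x. x \<in> carrier_vec m}"
  obtain Si where Si: "Si \<in> carrier_mat m m" "S * Si = 1\<^sub>m m" using invertible_matE[OF S(2,1)] by metis
  have closed: "A *\<^sub>v v \<in> ?W"
    if A: "A \<in> carrier_mat n n" and B: "B \<in> carrier_mat m m" and AQ: "A * Q = Q * B" and v: "v \<in> ?W" for A B v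
  proof -
    obtain x where x: "x \<in> carrier_vec m" "v = Q *\<^sub>v x" using v by blast
    have "A *\<^sub>v v = (A * Q) *\<^sub>v x" using assoc_mult_mat_vec[OF A Q x(1)] x(2) by simp
    also have "\<dots> = Q *\<^sub>v (B *\<^sub>v x)" unfolding AQ by (rule assoc_mult_mat_vec[OF Q B x(1)])
    finally show ?thesis using B x(1) by auto
  qed
  have "subspace_vec n ?W" by (rule subspace_vec_image[OF Q])
  moreover have "\<exists>u\<in>?W. E *\<^sub>v u = v" if v: "v \<in> ?W" for v
  proof -
    obtain x where x: "x \<in> carrier_vec m" "v = Q *\<^sub>v x" using v by blast
    have Six: "Si *\<^sub>v x \<in> carrier_vec m" using Si(1) x(1) by simp
    have "E *\<^sub>v (Q *\<^sub>v (Si *\<^sub>v x)) = (E * Q) *\<^sub>v (Si *\<^sub>v x)" by (rule assoc_mult_mat_vec[OF E Q Six, symmetric])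
    also have "\<dots> = Q *\<^sub>v (S *\<^sub>v (Si *\<^sub>v x))" unfolding EQ by (rule assoc_mult_mat_vec[OF Q S(1) Six])
    also have "S *\<^sub>v (Si *\<^sub>v x) = (S * Si) *\<^sub>v x" by (rule assoc_mult_mat_vec[OF S(1) Si(1) x(1), symmetric])
    finally have "E *\<^sub>v (Q *\<^sub>v (Si *\<^sub>v x)) = Q *\<^sub>v ((S * Si) *\<^sub>v x)" .
    then show ?thesis using x Si by (intro bexI[of _ "Q *\<^sub>v (Si *\<^sub>v x)"]) auto
  qed
  ultimately show ?thesis
    unfolding invariant_subspace_def using closed[OF E S(1) EQ] closed[OF D T DQ] by blast
qed

lemma irreducible_dim_eq:
  fixes Q :: "complex mat"
  assumes irr: "irreducible_rep N n E D" and m: "m > 0" and Q: "Q \<in> carrier_mat n m"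
    and inj: "\<And>x. x \<in> carrier_vec m \<Longrightarrow> Q *\<^sub>v x = 0\<^sub>v n \<Longrightarrow> x = 0\<^sub>v m"
    and S: "S \<in> carrier_mat m m" "invertible_mat S" and T: "T \<in> carrier_mat m m"
    and EQ: "E * Q = Q * S" and DQ: "D * Q = Q * T"
  shows "n = m"
proof -
  let ?W = "{Q *\<^sub>v x | x. x \<in> carrier_vec m}"
  have E: "E \<in> carrier_mat n n" and D: "D \<in> carrier_mat n n"
    using irr unfolding irreducible_rep_def is_rep_def by auto
  have "Q *\<^sub>v unit_vec m 0 \<noteq> 0\<^sub>v n" using inj[OF unit_vec_carrier] unit_vec_nonzero[OF m] by blast
  then have "?W \<noteq> {0\<^sub>v n}" by (metis (mono_tags, lifting) mem_Collect_eq singletonD unit_vec_carrier)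
  then have W: "?W = carrier_vec n"
    using irr image_invariant_subspace[OF E D Q S T EQ DQ] unfolding irreducible_rep_def by blast
  have "\<exists>x\<in>carrier_vec m. Q *\<^sub>v x = w" if "w \<in> carrier_vec n" for w
  proof -
    from that W have "w \<in> ?W" by simp
    then show ?thesis by blast
  qed
  then show ?thesis using dim_eq_if_bijective_mat[OF Q inj] by blast
qed

lemma invertible_mat_eigenvector_square:
  fixes E :: "complex mat"
  assumes E: "E \<in> carrier_mat n n" "invertible_mat E" and n: "n > 0"
  obtains a u where "a \<noteq> 0" "u \<in> carrier_vec n" "u \<noteq> 0\<^sub>v n" "E *\<^sub>v u = a^2 \<cdot>\<^sub>v u"
proof -
  obtain lam where "lam \<in> spectrum E" using spectrum_non_empty[OF E(1) n] by blast
  then obtain u where u: "u \<in> carrier_vec n" "u \<noteq> 0\<^sub>v n" "E *\<^sub>v u = lam \<cdot>\<^sub>v u"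
    unfolding spectrum_def eigenvalue_def eigenvector_def using E by auto
  have "lam \<noteq> 0"
    using invertible_pow_mat_kernel[OF E(2,1) u(1), of 1] u E by (auto simp: vec_eq_iff)
  then have "csqrt lam \<noteq> 0" "(csqrt lam)^2 = lam" by auto
  then show ?thesis using that u by metis
qed

lemma irreducible_cyclic_equiv_std:
  assumes N: "N > 0" and irr: "irreducible_rep N n E D" and cyc: "cyclic_rep N n E D"
  obtains a y where "a \<noteq> 0" "y \<noteq> 0" "equiv_rep n E D N (std_E N a y) (std_D N a y)"
proof -
  have E: "E \<in> carrier_mat n n" and D: "D \<in> carrier_mat n n" and ED: "E * D = omega N \<cdot>\<^sub>m (D * E)"
    and iE: "invertible_mat E" and n: "n > 0"
    using cyc irr unfolding cyclic_rep_def is_rep_def irreducible_rep_def by auto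
  obtain c where c: "c \<noteq> 0" "D ^\<^sub>m N = c \<cdot>\<^sub>m 1\<^sub>m n" using irreducible_cyclic_D_pow_N_scalar[OF N irr cyc] .
  obtain a u where a: "a \<noteq> 0" and u: "u \<in> carrier_vec n" "u \<noteq> 0\<^sub>v n" "E *\<^sub>v u = a^2 \<cdot>\<^sub>v u"
    using invertible_mat_eigenvector_square[OF E iE n] .
  obtain t where t: "t ^ N = c" using complex_nth_root_exists[OF N c(1)] .
  have t0: "t \<noteq> 0" using t c(1) N by auto
  let ?U = "mat_of_cols n [u]"
  have U: "?U \<in> carrier_mat n 1" using mat_of_cols_carrier[of n "[u]"] by simp
  have EU: "E * ?U = a^2 \<cdot>\<^sub>m ?U"
    unfolding mult_mat_of_cols_single[OF E u(1)] u(3) by (rule mat_of_cols_single_smult[OF u(1)])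
  have DU: "D ^\<^sub>m N * ?U = t ^ N \<cdot>\<^sub>m ?U" unfolding c(2) t by (rule smult_one_mat_mult[OF U])
  have Uinj: "\<And>z. z \<in> carrier_vec 1 \<Longrightarrow> ?U *\<^sub>v z = 0\<^sub>v n \<Longrightarrow> z = 0\<^sub>v 1"
    using mat_of_cols_single_kernel[OF u(1,2)] by blast
  let ?Q = "cyclic_basis_mat N t D ?U" and ?S = "std_E N a (t / a)" and ?T = "std_D N a (t / a)"
  have y: "t / a \<noteq> 0" using a t0 by simp
  have nN: "n = 1 * N"
  proof (rule irreducible_dim_eq[OF irr _ cyclic_basis_mat_carrier[OF U]])
    show "E * ?Q = ?Q * diag_copies 1 ?S" by (rule cyclic_basis_mat_intertwines_E[OF N E D U ED EU])
    show "D * ?Q = ?Q * diag_copies 1 ?T" by (rule cyclic_basis_mat_intertwines_D[OF N D U DU a t0])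
    show "invertible_mat (diag_copies 1 ?S)"
      using std_cyclic_rep[OF N a y] diag_copies_1[OF std_carrier(1)] unfolding cyclic_rep_def by simp
  qed (use N cyclic_basis_mat_kernel[OF N E D U ED EU DU a t0 Uinj] in auto)
  have E1: "E \<in> carrier_mat (1 * N) (1 * N)" and D1: "D \<in> carrier_mat (1 * N) (1 * N)"
    and U1: "?U \<in> carrier_mat (1 * N) 1" using E D U nN by simp_all
  have Uinj1: "\<And>z. z \<in> carrier_vec 1 \<Longrightarrow> ?U *\<^sub>v z = 0\<^sub>v (1 * N) \<Longrightarrow> z = 0\<^sub>v 1"
    using Uinj nN by simp
  have "equiv_rep (1 * N) (diag_copies 1 ?S) (diag_copies 1 ?T) (1 * N) E D"
    by (rule cyclic_basis_equiv[OF N E1 D1 U1 ED EU DU a t0 Uinj1])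
  then have "equiv_rep N ?S ?T N E D"
    by (simp only: mult_1 diag_copies_1[OF std_carrier(1)] diag_copies_1[OF std_carrier(2)])
  moreover have "E \<in> carrier_mat N N" "D \<in> carrier_mat N N" using E1 D1 by simp_all
  ultimately have "equiv_rep N E D N ?S ?T" using equiv_rep_sym[OF std_carrier(1,2)] by blast
  then show ?thesis using that[OF a y] nN by simp
qed

section \<open>Tensor products\<close>

lemma tensor_equiv_rep:
  assumes E1: "E1 \<in> carrier_mat m m" and D1: "D1 \<in> carrier_mat m m"
    and S1: "S1 \<in> carrier_mat m m" and T1: "T1 \<in> carrier_mat m m"
    and E2: "E2 \<in> carrier_mat n n" and D2: "D2 \<in> carrier_mat n n"
    and S2: "S2 \<in> carrier_mat n n" and T2: "T2 \<in> carrier_mat n n"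
    and e1: "equiv_rep m E1 D1 m S1 T1" and e2: "equiv_rep n E2 D2 n S2 T2"
  shows "equiv_rep (m * n) (tensor_E E1 E2) (tensor_D E1 D1 E2 D2) (m * n) (tensor_E S1 S2) (tensor_D S1 T1 S2 T2)"
proof -
  from e1 obtain P1 where P1: "P1 \<in> carrier_mat m m" "invertible_mat P1" "P1 * E1 = S1 * P1" "P1 * D1 = T1 * P1"
    unfolding equiv_rep_def by auto
  from e2 obtain P2 where P2: "P2 \<in> carrier_mat n n" "invertible_mat P2" "P2 * E2 = S2 * P2" "P2 * D2 = T2 * P2"
    unfolding equiv_rep_def by auto
  obtain B1 where B1: "B1 \<in> carrier_mat m m" "P1 * B1 = 1\<^sub>m m" "B1 * P1 = 1\<^sub>m m" using invertible_matE[OF P1(2,1)] .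
  obtain B2 where B2: "B2 \<in> carrier_mat n n" "P2 * B2 = 1\<^sub>m n" "B2 * P2 = 1\<^sub>m n" using invertible_matE[OF P2(2,1)] .
  let ?P = "kron P1 P2"
  have P: "?P \<in> carrier_mat (m * n) (m * n)" using P1 P2 by simp
  have "?P * kron B1 B2 = 1\<^sub>m (m * n)" "kron B1 B2 * ?P = 1\<^sub>m (m * n)"
    using kron_mult_kron[OF P1(1) B1(1) P2(1) B2(1)] kron_mult_kron[OF B1(1) P1(1) B2(1) P2(1)] B1 B2
    by (simp_all add: kron_one_mat)
  then have inv: "invertible_mat ?P" using P B1(1) B2(1) by (intro invertible_matI) auto
  have one: "1\<^sub>m n \<in> carrier_mat n n" by simp
  have cE: "?P * tensor_E E1 E2 = tensor_E S1 S2 * ?P"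
    unfolding tensor_E_def kron_mult_kron[OF P1(1) E1 P2(1) E2] kron_mult_kron[OF S1 P1(1) S2 P2(1)] P1(3) P2(3) ..
  have "?P * tensor_D E1 D1 E2 D2 = ?P * kron E1 D2 + ?P * kron D1 (1\<^sub>m n)"
    unfolding tensor_D_def using E2 by (simp add: mult_add_distrib_mat[OF P kron_carrier[OF E1 D2] kron_carrier[OF D1 one]])
  also have "\<dots> = kron S1 T2 * ?P + kron T1 (1\<^sub>m n) * ?P"
    unfolding kron_mult_kron[OF P1(1) E1 P2(1) D2] kron_mult_kron[OF P1(1) D1 P2(1) one]
      kron_mult_kron[OF S1 P1(1) T2 P2(1)] kron_mult_kron[OF T1 P1(1) one P2(1)] P1(3,4) P2(4)
    using P2(1) by simp
  also have "\<dots> = tensor_D S1 T1 S2 T2 * ?P"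
    unfolding tensor_D_def using S2 by (simp add: add_mult_distrib_mat[OF kron_carrier[OF S1 T2] kron_carrier[OF T1 one] P])
  finally show ?thesis unfolding equiv_rep_def using P inv cE by blast
qed

lemma tensor_commute:
  assumes E1: "E1 \<in> carrier_mat m m" and D1: "D1 \<in> carrier_mat m m"
    and E2: "E2 \<in> carrier_mat n n" and D2: "D2 \<in> carrier_mat n n"
    and ED1: "E1 * D1 = omega N \<cdot>\<^sub>m (D1 * E1)" and ED2: "E2 * D2 = omega N \<cdot>\<^sub>m (D2 * E2)"
  shows "tensor_E E1 E2 * tensor_D E1 D1 E2 D2 = omega N \<cdot>\<^sub>m (tensor_D E1 D1 E2 D2 * tensor_E E1 E2)"
proof -
  have one: "1\<^sub>m n \<in> carrier_mat n n" by simp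
  have "tensor_D E1 D1 E2 D2 * tensor_E E1 E2 = kron (E1 * E1) (D2 * E2) + kron (D1 * E1) (1\<^sub>m n * E2)"
    unfolding tensor_E_def tensor_D_def
    using E2 by (simp add: add_mult_distrib_mat[OF kron_carrier[OF E1 D2] kron_carrier[OF D1 one] kron_carrier[OF E1 E2]]
        kron_mult_kron[OF E1 E1 D2 E2] kron_mult_kron[OF D1 E1 one E2])
  moreover have "tensor_E E1 E2 * tensor_D E1 D1 E2 D2
      = kron (E1 * E1) (omega N \<cdot>\<^sub>m (D2 * E2)) + kron (omega N \<cdot>\<^sub>m (D1 * E1)) (1\<^sub>m n * E2)"
    unfolding tensor_E_def tensor_D_def ED1[symmetric] ED2[symmetric]
    using E2 by (simp add: mult_add_distrib_mat[OF kron_carrier[OF E1 E2] kron_carrier[OF E1 D2] kron_carrier[OF D1 one]]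
        kron_mult_kron[OF E1 E1 E2 D2] kron_mult_kron[OF E1 D1 E2 one])
  ultimately show ?thesis
    using E1 D1 E2 D2 by (simp add: kron_smult_left[of _ m m _ n n] kron_smult_right[of _ m m _ n n]
        add_smult_distrib_left_mat[of _ "m * n" "m * n"])
qed

lemma tensor_D_pow_N:
  assumes N: "N > 0" and E1: "E1 \<in> carrier_mat m m" and D1: "D1 \<in> carrier_mat m m"
    and E2: "E2 \<in> carrier_mat n n" and D2: "D2 \<in> carrier_mat n n"
    and ED1: "E1 * D1 = omega N \<cdot>\<^sub>m (D1 * E1)"
  shows "tensor_D E1 D1 E2 D2 ^\<^sub>m N = kron (D1 ^\<^sub>m N) (1\<^sub>m n) + kron (E1 ^\<^sub>m N) (D2 ^\<^sub>m N)"
proof -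
  let ?A = "kron D1 (1\<^sub>m n)" and ?B = "kron E1 D2"
  have one: "1\<^sub>m n \<in> carrier_mat n n" by simp
  have A: "?A \<in> carrier_mat (m * n) (m * n)" and B: "?B \<in> carrier_mat (m * n) (m * n)"
    using D1 E1 D2 by auto
  have "?B * ?A = kron (omega N \<cdot>\<^sub>m (D1 * E1)) (1\<^sub>m n * D2)"
    unfolding kron_mult_kron[OF E1 D1 D2 one] ED1 using D2 by simp
  also have "\<dots> = omega N \<cdot>\<^sub>m (?A * ?B)"
    unfolding kron_mult_kron[OF D1 E1 one D2] using D1 E1 D2 by (simp add: kron_smult_left[of _ m m _ n n])
  finally have "?B * ?A = omega N \<cdot>\<^sub>m (?A * ?B)" .
  then have "(?A + ?B) ^\<^sub>m N = ?A ^\<^sub>m N + ?B ^\<^sub>m N" by (rule pow_mat_add_omega_commuting[OF N A B])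
  moreover have "tensor_D E1 D1 E2 D2 = ?A + ?B" unfolding tensor_D_def using E2 comm_add_mat[OF B A] by simp
  ultimately show ?thesis by (simp add: kron_pow_mat[OF D1 one] kron_pow_mat[OF E1 D2] pow_one_mat)
qed

lemma tensor_std_D_pow_N:
  assumes N: "N > 0" and a2: "a2 \<noteq> 0"
  shows "tensor_D (std_E N a1 y1) (std_D N a1 y1) (std_E N a2 y2) (std_D N a2 y2) ^\<^sub>m N
    = (a1 ^ N * a2 ^ N * (a1 ^ N * y2 ^ N + y1 ^ N / a2 ^ N)) \<cdot>\<^sub>m 1\<^sub>m (N * N)"
proof -
  have one: "1\<^sub>m N \<in> carrier_mat N N" by simp
  have "tensor_D (std_E N a1 y1) (std_D N a1 y1) (std_E N a2 y2) (std_D N a2 y2) ^\<^sub>m N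
      = kron ((a1 * y1) ^ N \<cdot>\<^sub>m 1\<^sub>m N) (1\<^sub>m N) + kron (a1 ^ (2 * N) \<cdot>\<^sub>m 1\<^sub>m N) ((a2 * y2) ^ N \<cdot>\<^sub>m 1\<^sub>m N)"
    using tensor_D_pow_N[OF N std_carrier(1,2) std_carrier(1,2) std_commute[OF N]]
    by (simp add: std_E_pow_N[OF N] std_D_pow_N[OF N])
  also have "\<dots> = ((a1 * y1) ^ N + a1 ^ (2 * N) * (a2 * y2) ^ N) \<cdot>\<^sub>m 1\<^sub>m (N * N)"
    by (simp add: kron_smult_left[OF one one] kron_smult_left[OF one smult_carrier_mat[OF one]]
        kron_smult_right[OF one one] kron_one_mat add_smult_distrib_right_mat[of "1\<^sub>m (N * N)" "N * N" "N * N"])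
  also have "(a1 * y1) ^ N + a1 ^ (2 * N) * (a2 * y2) ^ N = a1 ^ N * a2 ^ N * (a1 ^ N * y2 ^ N + y1 ^ N / a2 ^ N)"
    using a2 by (simp add: field_simps power_mult_distrib power_mult power2_eq_square)
  finally show ?thesis .
qed

text \<open>Column c of the antidiagonal matrix is e_c (x) e_{-c}; these columns span the
  (a1 a2)^2-eigenspace of the tensor product of standard E's.\<close>

definition antidiag_tensor_mat :: "nat \<Rightarrow> complex mat" where
  "antidiag_tensor_mat N = mat (N * N) N (\<lambda>(i, c). if i = c * N + (N - c) mod N then 1 else 0)"

lemma antidiag_tensor_mat_carrier [simp]: "antidiag_tensor_mat N \<in> carrier_mat (N * N) N"
  by (simp add: antidiag_tensor_mat_def)

lemma dim_antidiag_tensor_mat [simp]: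
  "dim_row (antidiag_tensor_mat N) = N * N" "dim_col (antidiag_tensor_mat N) = N"
  by (simp_all add: antidiag_tensor_mat_def)

lemma antidiag_index:
  fixes c N :: nat
  assumes "c < N"
  shows "c * N + (N - c) mod N < N * N" "(c * N + (N - c) mod N) div N = c" "(c * N + (N - c) mod N) mod N = (N - c) mod N"
  using assms by (auto intro: block_index_less)

lemma tensor_std_E_mult_antidiag:
  assumes N: "N > 0"
  shows "tensor_E (std_E N a1 y1) (std_E N a2 y2) * antidiag_tensor_mat N = (a1 * a2)^2 \<cdot>\<^sub>m antidiag_tensor_mat N"
proof (rule eq_matI)
  let ?E = "tensor_E (std_E N a1 y1) (std_E N a2 y2)" and ?U = "antidiag_tensor_mat N"
  fix i c assume "i < dim_row ((a1 * a2)^2 \<cdot>\<^sub>m ?U)" "c < dim_col ((a1 * a2)^2 \<cdot>\<^sub>m ?U)"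
  then have i: "i < N * N" and c: "c < N" by auto
  let ?j = "c * N + (N - c) mod N"
  note j = antidiag_index[OF c]
  have E: "?E \<in> carrier_mat (N * N) (N * N)" unfolding tensor_E_def by simp
  have id: "i div N < N" "i mod N < N" using div_mod_less_of_less_mult[OF i] by auto
  have "(?E * ?U) $$ (i, c) = (\<Sum>l<N * N. if l = ?j then ?E $$ (i, ?j) else 0)"
    unfolding index_mult_mat_sum[OF E antidiag_tensor_mat_carrier i c]
    by (rule sum.cong) (use c in \<open>auto simp: antidiag_tensor_mat_def\<close>)
  also have "\<dots> = std_E N a1 y1 $$ (i div N, c) * std_E N a2 y2 $$ (i mod N, (N - c) mod N)"
    using j i unfolding tensor_E_def by (simp add: index_kron[OF std_carrier(1) std_carrier(1) i j(1)])
  also have "\<dots> = (if i = ?j then (a1 * a2)^2 else 0)"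
  proof (cases "i = ?j")
    case True
    have "omega N ^ c * omega N ^ ((N - c) mod N) = omega N ^ ((c + (N - c) mod N) mod N)"
      by (simp add: omega_power_mod[OF N] power_add)
    also have "(c + (N - c) mod N) mod N = 0" using c by (simp add: mod_add_right_eq)
    finally show ?thesis using True j c N by (simp add: power_mult_distrib mult_ac)
  next
    case False
    then have "i div N \<noteq> c \<or> i mod N \<noteq> (N - c) mod N" using nat_eq_iff_div_mod_eq[of i ?j N] j by auto
    then show ?thesis using False id c N by auto
  qed
  finally show "(?E * ?U) $$ (i, c) = ((a1 * a2)^2 \<cdot>\<^sub>m ?U) $$ (i, c)"
    using i c by (simp add: antidiag_tensor_mat_def)
qed (auto simp: tensor_E_def)

lemma antidiag_tensor_mat_kernel:
  assumes N: "N > 0" and z: "z \<in> carrier_vec N" and Uz: "antidiag_tensor_mat N *\<^sub>v z = 0\<^sub>v (N * N)"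
  shows "z = 0\<^sub>v N"
proof (rule eq_vecI)
  fix c assume "c < dim_vec (0\<^sub>v N :: complex vec)"
  then have c: "c < N" by simp
  note j = antidiag_index[OF c]
  have "(antidiag_tensor_mat N *\<^sub>v z) $ (c * N + (N - c) mod N) = (\<Sum>l<N. if l = c then z $ c else 0)"
    unfolding index_mult_mat_vec_sum[OF antidiag_tensor_mat_carrier z j(1)]
  proof (rule sum.cong)
    fix l assume l: "l \<in> {..<N}"
    have "c * N + (N - c) mod N = l * N + (N - l) mod N \<longleftrightarrow> l = c"
      using j(2) antidiag_index(2)[of l N] l by (metis lessThan_iff)
    then show "antidiag_tensor_mat N $$ (c * N + (N - c) mod N, l) * z $ l = (if l = c then z $ c else 0)"
      using l j by (auto simp: antidiag_tensor_mat_def)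
  qed simp
  then show "z $ c = 0\<^sub>v N $ c" using Uz j c by simp
qed (use z in simp)

lemma std_tensor_equiv:
  assumes N: "N > 0" and a1: "a1 \<noteq> 0" and a2: "a2 \<noteq> 0" and y: "y \<noteq> 0"
    and yN: "y ^ N = a1 ^ N * y2 ^ N + y1 ^ N / a2 ^ N"
  shows "equiv_rep (N * N) (diag_copies N (std_E N (a1 * a2) y)) (diag_copies N (std_D N (a1 * a2) y)) (N * N)
    (tensor_E (std_E N a1 y1) (std_E N a2 y2)) (tensor_D (std_E N a1 y1) (std_D N a1 y1) (std_E N a2 y2) (std_D N a2 y2))"
proof -
  let ?E = "tensor_E (std_E N a1 y1) (std_E N a2 y2)"
    and ?D = "tensor_D (std_E N a1 y1) (std_D N a1 y1) (std_E N a2 y2) (std_D N a2 y2)"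
  let ?U = "antidiag_tensor_mat N" and ?t = "a1 * a2 * y"
  have ED: "?E * ?D = omega N \<cdot>\<^sub>m (?D * ?E)"
    by (rule tensor_commute[OF std_carrier(1,2) std_carrier(1,2) std_commute[OF N] std_commute[OF N]])
  have "?D ^\<^sub>m N = ?t ^ N \<cdot>\<^sub>m 1\<^sub>m (N * N)"
    unfolding tensor_std_D_pow_N[OF N a2] by (simp add: yN power_mult_distrib)
  then have DU: "?D ^\<^sub>m N * ?U = ?t ^ N \<cdot>\<^sub>m ?U" by (simp add: smult_one_mat_mult[OF antidiag_tensor_mat_carrier])
  have "equiv_rep (N * N) (diag_copies N (std_E N (a1 * a2) (?t / (a1 * a2)))) (diag_copies N (std_D N (a1 * a2) (?t / (a1 * a2))))
      (N * N) ?E ?D"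
    using a1 a2 y antidiag_tensor_mat_kernel[OF N]
    by (intro cyclic_basis_equiv[OF N _ _ antidiag_tensor_mat_carrier ED tensor_std_E_mult_antidiag[OF N] DU])
      (auto simp: tensor_E_def tensor_D_def)
  then show ?thesis using a1 a2 by simp
qed

lemma tensor_decomposition:
  assumes N: "N > 0" and irr1: "irreducible_rep N n1 E1 D1" and irr2: "irreducible_rep N n2 E2 D2"
    and cyc: "cyclic_rep N (n1 * n2) (tensor_E E1 E2) (tensor_D E1 D1 E2 D2)"
    and a1: "a1 \<noteq> 0" and a2: "a2 \<noteq> 0"
    and e1: "equiv_rep n1 E1 D1 N (std_E N a1 y1) (std_D N a1 y1)"
    and e2: "equiv_rep n2 E2 D2 N (std_E N a2 y2) (std_D N a2 y2)"
    and yN: "y ^ N = a1 ^ N * y2 ^ N + y1 ^ N / a2 ^ N"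
  shows "equiv_rep (n1 * n2) (tensor_E E1 E2) (tensor_D E1 D1 E2 D2)
    (N * N) (diag_copies N (std_E N (a1 * a2) y)) (diag_copies N (std_D N (a1 * a2) y))"
proof -
  have n: "n1 = N" "n2 = N" using e1 e2 unfolding equiv_rep_def by auto
  have E1: "E1 \<in> carrier_mat N N" and D1: "D1 \<in> carrier_mat N N"
    and E2: "E2 \<in> carrier_mat N N" and D2: "D2 \<in> carrier_mat N N"
    using irr1 irr2 n unfolding irreducible_rep_def is_rep_def by auto
  let ?Es = "tensor_E (std_E N a1 y1) (std_E N a2 y2)"
    and ?Ds = "tensor_D (std_E N a1 y1) (std_D N a1 y1) (std_E N a2 y2) (std_D N a2 y2)"
  let ?Eo = "tensor_E E1 E2" and ?Do = "tensor_D E1 D1 E2 D2"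
  have tr: "equiv_rep (N * N) ?Eo ?Do (N * N) ?Es ?Ds"
    using e1 e2 n by (intro tensor_equiv_rep[OF E1 D1 std_carrier(1,2) E2 D2 std_carrier(1,2)]) auto
  then obtain P where P: "P \<in> carrier_mat (N * N) (N * N)" "invertible_mat P" "P * ?Do = ?Ds * P"
    unfolding equiv_rep_def by auto
  let ?c = "a1 ^ N * a2 ^ N * y ^ N"
  have "P * ?Do ^\<^sub>m N = (?c \<cdot>\<^sub>m 1\<^sub>m (N * N)) * P"
    using pow_mat_intertwine[OF P(1) _ _ P(3)] tensor_std_D_pow_N[OF N a2] E1 D1 E2 D2 yN by simp
  then have "?Do ^\<^sub>m N = ?c \<cdot>\<^sub>m 1\<^sub>m (N * N)" using E1 D1 E2 D2 by (intro scalar_mat_if_conjugate[OF P(1,2)]) auto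
  then have "?c \<noteq> 0" using cyc n N E1 D1 E2 D2 unfolding cyclic_rep_def by (intro pow_mat_scalar_nonzero) auto
  then have y: "y \<noteq> 0" using N by (metis mult_zero_right zero_power)
  note Eo = tensor_carrier[OF E1 D1 E2 D2] and Es = tensor_carrier[OF std_carrier(1,2) std_carrier(1,2)]
    and diag = diag_copies_carrier[OF std_carrier(1), of N] diag_copies_carrier[OF std_carrier(2), of N]
  have "equiv_rep (N * N) ?Es ?Ds (N * N) (diag_copies N (std_E N (a1 * a2) y)) (diag_copies N (std_D N (a1 * a2) y))"
    by (rule equiv_rep_sym[OF diag Es std_tensor_equiv[OF N a1 a2 y yN]])
  then show ?thesis using equiv_rep_trans[OF Eo Es diag tr] n by simp
qed

theorem proposition2p4:
  fixes N :: nat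
  assumes "odd N" and "N \<ge> 3"
  shows
    "(\<forall>a y. a \<noteq> 0 \<longrightarrow> y \<noteq> 0 \<longrightarrow>
        irreducible_rep N N (std_E N a y) (std_D N a y)
        \<and> cyclic_rep N N (std_E N a y) (std_D N a y))
   \<and> (\<forall>a1 y1 a2 y2. a1 \<noteq> 0 \<longrightarrow> y1 \<noteq> 0 \<longrightarrow> a2 \<noteq> 0 \<longrightarrow> y2 \<noteq> 0 \<longrightarrow>
        (equiv_rep N (std_E N a1 y1) (std_D N a1 y1) N (std_E N a2 y2) (std_D N a2 y2)
         \<longleftrightarrow> a1 ^ (2 * N) = a2 ^ (2 * N) \<and> a1 ^ N * y1 ^ N = a2 ^ N * y2 ^ N))
   \<and> (\<forall>n E D. irreducible_rep N n E D \<longrightarrow> cyclic_rep N n E D \<longrightarrow>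
        (\<exists>a y. a \<noteq> 0 \<and> y \<noteq> 0 \<and> equiv_rep n E D N (std_E N a y) (std_D N a y)))
   \<and> (\<forall>root :: complex \<Rightarrow> complex. (\<forall>u. root u ^ N = u) \<longrightarrow>
        (\<forall>n1 E1 D1 n2 E2 D2 a1 y1 a2 y2.
          irreducible_rep N n1 E1 D1 \<longrightarrow> cyclic_rep N n1 E1 D1 \<longrightarrow>
          irreducible_rep N n2 E2 D2 \<longrightarrow> cyclic_rep N n2 E2 D2 \<longrightarrow>
          cyclic_rep N (n1 * n2) (tensor_E E1 E2) (tensor_D E1 D1 E2 D2) \<longrightarrow>
          a1 \<noteq> 0 \<longrightarrow> y1 \<noteq> 0 \<longrightarrow> a2 \<noteq> 0 \<longrightarrow> y2 \<noteq> 0 \<longrightarrow>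
          equiv_rep n1 E1 D1 N (std_E N a1 y1) (std_D N a1 y1) \<longrightarrow>
          equiv_rep n2 E2 D2 N (std_E N a2 y2) (std_D N a2 y2) \<longrightarrow>
          (let a = a1 * a2; y = root (a1 ^ N * y2 ^ N + y1 ^ N / a2 ^ N) in
            equiv_rep (n1 * n2) (tensor_E E1 E2) (tensor_D E1 D1 E2 D2)
              (N * N) (diag_copies N (std_E N a y)) (diag_copies N (std_D N a y)))))"
proof -
  have N: "N > 0" using assms(2) by simp
  show ?thesis
    unfolding Let_def
  proof (intro conjI allI impI)
    fix n E D assume "irreducible_rep N n E D" "cyclic_rep N n E D"
    then show "\<exists>a y. a \<noteq> 0 \<and> y \<noteq> 0 \<and> equiv_rep n E D N (std_E N a y) (std_D N a y)"
      using irreducible_cyclic_equiv_std[OF N] by metis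
  qed (auto intro: std_irreducible[OF N] std_cyclic_rep[OF N] tensor_decomposition[OF N] simp: std_equiv_iff[OF N])
qed

end
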